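(* Let $k\subset K$ be differential fields of characteristic zero with the same algebraically closed field of constants $C$, and assume there exists $x\in k$ with $x'=1$. Let $f\in K$ be an iterated integral over $k$. Then: (1) $k\langle f\rangle$ is a Picard–Vessiot extension of $k$ with unipotent differential Galois group; (2) if $f\notin k$, then there exist elements $y_1,\dots,y_{r-1},y_r=f$ of $k\langle f\rangle$, algebraically independent over $k$, such that $k\langle f\rangle=k(y_1,\dots,y_r)$; in particular $k(f)$ is relatively algebraically closed in $k\langle f\rangle$.
   Context: An element $f\in K$ is an iterated integral over $k$ if $f^{(n)}\in k$ for some $n\in\mathbb{N}$. $k\langle f\rangle$ denotes the differential subfield of $K$ generated by $f$ over $k$, i.e. $k(f,f',f'',\dots)$. *)

theory Defs
  imports Main "HOL-Computational_Algebra.Polynomial"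
begin

text \<open>The ambient differential field K is the type 'a (a field of characteristic zero)
  with derivation D; subfields are represented as subsets of 'a.\<close>

definition is_derivation :: "('a::field \<Rightarrow> 'a) \<Rightarrow> bool" where
  "is_derivation D \<longleftrightarrow> (\<forall>x y. D (x + y) = D x + D y) \<and> (\<forall>x y. D (x * y) = D x * y + x * D y)"

definition is_subfield :: "'a::field set \<Rightarrow> bool" where
  "is_subfield F \<longleftrightarrow> 0 \<in> F \<and> 1 \<in> F \<and> (\<forall>x\<in>F. \<forall>y\<in>F. x + y \<in> F \<and> x * y \<in> F)
     \<and> (\<forall>x\<in>F. - x \<in> F) \<and> (\<forall>x\<in>F. inverse x \<in> F)"

definition is_diff_subfield :: "('a::field \<Rightarrow> 'a) \<Rightarrow> 'a set \<Rightarrow> bool" where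
  "is_diff_subfield D F \<longleftrightarrow> is_subfield F \<and> (\<forall>x\<in>F. D x \<in> F)"

definition field_gen :: "'a::field set \<Rightarrow> 'a set" where
  "field_gen S = \<Inter>{F. is_subfield F \<and> S \<subseteq> F}"

definition diff_field_gen :: "('a::field \<Rightarrow> 'a) \<Rightarrow> 'a set \<Rightarrow> 'a set" where
  "diff_field_gen D S = \<Inter>{F. is_diff_subfield D F \<and> S \<subseteq> F}"

definition diff_adjoin :: "('a::field \<Rightarrow> 'a) \<Rightarrow> 'a set \<Rightarrow> 'a \<Rightarrow> 'a set" where
  "diff_adjoin D k f = diff_field_gen D (k \<union> {f})"

definition constants_of :: "('a::field \<Rightarrow> 'a) \<Rightarrow> 'a set \<Rightarrow> 'a set" where
  "constants_of D F = {c \<in> F. D c = 0}"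

definition alg_closed_subfield :: "'a::field set \<Rightarrow> bool" where
  "alg_closed_subfield C \<longleftrightarrow>
     (\<forall>p::'a poly. (\<forall>i. coeff p i \<in> C) \<and> degree p > 0 \<longrightarrow> (\<exists>c\<in>C. poly p c = 0))"

definition iterated_integral :: "('a::field \<Rightarrow> 'a) \<Rightarrow> 'a set \<Rightarrow> 'a \<Rightarrow> bool" where
  "iterated_integral D k f \<longleftrightarrow> (\<exists>n. (D ^^ n) f \<in> k)"

definition pv_data :: "('a::field \<Rightarrow> 'a) \<Rightarrow> 'a set \<Rightarrow> 'a set \<Rightarrow> nat \<Rightarrow> (nat \<Rightarrow> 'a) \<Rightarrow> (nat \<Rightarrow> 'a) \<Rightarrow> bool" where
  "pv_data D k L n a y \<longleftrightarrow>
     (\<forall>j<n. a j \<in> k) \<and>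
     (\<forall>i<n. y i \<in> L \<and> (D ^^ n) (y i) + (\<Sum>j<n. a j * (D ^^ j) (y i)) = 0) \<and>
     (\<forall>c. (\<forall>i<n. D (c i) = 0) \<and> (\<Sum>i<n. c i * y i) = 0 \<longrightarrow> (\<forall>i<n. c i = 0)) \<and>
     L = diff_field_gen D (k \<union> y ` {..<n})"

definition picard_vessiot :: "('a::field \<Rightarrow> 'a) \<Rightarrow> 'a set \<Rightarrow> 'a set \<Rightarrow> bool" where
  "picard_vessiot D k L \<longleftrightarrow> is_diff_subfield D k \<and> is_diff_subfield D L \<and> k \<subseteq> L \<and>
     constants_of D L = constants_of D k \<and> (\<exists>n a y. pv_data D k L n a y)"

definition diff_aut :: "('a::field \<Rightarrow> 'a) \<Rightarrow> 'a set \<Rightarrow> 'a set \<Rightarrow> ('a \<Rightarrow> 'a) \<Rightarrow> bool" where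
  "diff_aut D k L \<sigma> \<longleftrightarrow> bij_betw \<sigma> L L \<and>
     (\<forall>x\<in>L. \<forall>y\<in>L. \<sigma> (x + y) = \<sigma> x + \<sigma> y \<and> \<sigma> (x * y) = \<sigma> x * \<sigma> y) \<and>
     (\<forall>x\<in>L. \<sigma> (D x) = D (\<sigma> x)) \<and> (\<forall>c\<in>k. \<sigma> c = c)"

text \<open>The differential Galois group, viewed as a linear algebraic group acting on the
  solution space V = C-span of a fundamental set, is unipotent: every element acts as a
  unipotent operator on V. This is required for every fundamental set generating L
  (unipotence does not depend on the faithful representation).\<close>
definition unipotent_galois :: "('a::field \<Rightarrow> 'a) \<Rightarrow> 'a set \<Rightarrow> 'a set \<Rightarrow> bool" where
  "unipotent_galois D k L \<longleftrightarrow>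
     (\<forall>n a y \<sigma>. pv_data D k L n a y \<and> diff_aut D k L \<sigma> \<longrightarrow>
        (\<exists>m. \<forall>c. (\<forall>i<n. D (c i) = 0) \<longrightarrow>
             ((\<lambda>z. \<sigma> z - z) ^^ m) (\<Sum>i<n. c i * y i) = 0))"

definition algebraic_over :: "'a::field set \<Rightarrow> 'a \<Rightarrow> bool" where
  "algebraic_over F z \<longleftrightarrow> (\<exists>p::'a poly. p \<noteq> 0 \<and> (\<forall>i. coeff p i \<in> F) \<and> poly p z = 0)"

definition alg_indep :: "'a::field set \<Rightarrow> nat \<Rightarrow> (nat \<Rightarrow> 'a) \<Rightarrow> bool" where
  "alg_indep k r y \<longleftrightarrow>
     (\<forall>E c. finite E \<and> (\<forall>e\<in>E. \<forall>i\<ge>r. e i = 0) \<and> (\<forall>e\<in>E. c e \<in> k) \<and>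
        (\<Sum>e\<in>E. c e * (\<Prod>i<r. y i ^ e i)) = 0 \<longrightarrow> (\<forall>e\<in>E. c e = 0))"

definition rel_alg_closed_in :: "'a::field set \<Rightarrow> 'a set \<Rightarrow> bool" where
  "rel_alg_closed_in F L \<longleftrightarrow> (\<forall>z\<in>L. algebraic_over F z \<longrightarrow> z \<in> F)"

end

theory Submission
  imports Defs
begin

(*
  Let n be least with f^(n) in k. Then k<f> = k(f, f', ..., f^(n-1)), and going down from f^(n-1)
  to f each new element is a primitive over the field generated so far. Such a primitive is either
  transcendental, and then extends a tower k = E_0 < E_1 < ... < E_r of primitives u_j with
  u_j' in k[u_0, ..., u_(j-1)], or it already lies in the tower; in the second case it is affine in
  the last generator with a coefficient in C[x], because a polynomial in a transcendental primitive
  whose derivative has degree one has degree one. At the end f is affine in u_(r-1), so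
  u_0, ..., u_(r-2), f is a transcendence basis generating k<f>; the exchange property and the
  relative algebraic closedness of G in G(w) for transcendental w give that k(f) is relatively
  algebraically closed in k<f>.
  A nonzero differential ideal of k[u_0, ..., u_(r-1)] meets k, so solutions in the tower of linear
  differential equations over k lie in this ring. A differential automorphism fixes k and moves
  each u_j by an element of k[u_0, ..., u_(j-1)], so sigma - 1 is locally nilpotent on the ring:
  the Galois group is unipotent. Finally 1, x, ..., x^(n-1), f is a fundamental system of
  y^(n+1) = (f^(n+1) / f^(n)) y^(n).
*)


locale derivation =
  fixes D :: "'a::field_char_0 \<Rightarrow> 'a"
  assumes is_derivation: "is_derivation D"
begin

lemma D_add: "D (x + y) = D x + D y"
  using is_derivation unfolding is_derivation_def by blast

lemma D_mult: "D (x * y) = D x * y + x * D y"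
  using is_derivation unfolding is_derivation_def by blast

lemma D_0 [simp]: "D 0 = 0"
  using D_add[of 0 0] by simp

lemma D_1 [simp]: "D 1 = 0"
  using D_mult[of 1 1] by simp

lemma D_uminus: "D (- x) = - D x"
  using D_add[of x "- x"] by (simp add: eq_neg_iff_add_eq_0 add.commute)

lemma D_diff: "D (x - y) = D x - D y"
  using D_add[of x "- y"] D_uminus[of y] by simp

lemma D_of_nat [simp]: "D (of_nat n) = 0"
  by (induction n) (auto simp: D_add)

lemma D_power_Suc: "D (x ^ Suc n) = of_nat (Suc n) * x ^ n * D x"
  by (induction n) (simp_all add: D_mult algebra_simps)

lemma D_mult_const: "D c = 0 \<Longrightarrow> D (c * x) = c * D x"
  by (simp add: D_mult)

lemma D_inverse: "D (inverse x) = - D x * inverse x ^ 2"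
proof (cases "x = 0")
  case False
  have "0 = D (x * inverse x)" using False by simp
  also have "\<dots> = D x * inverse x + x * D (inverse x)" by (rule D_mult)
  finally have "x * D (inverse x) = - (D x * inverse x)"
    by (simp add: eq_neg_iff_add_eq_0 add.commute)
  then have "D (inverse x) = inverse x * - (D x * inverse x)"
    using False by (metis mult.assoc mult.left_neutral left_inverse)
  then show ?thesis by (simp add: power2_eq_square)
qed simp

lemma D_const_divide: "D a = 0 \<Longrightarrow> D b = 0 \<Longrightarrow> D (a / b) = 0"
  by (simp add: divide_inverse D_mult D_inverse)

lemma funpow_D_0 [simp]: "(D ^^ n) 0 = 0"
  by (induction n) auto

lemma funpow_D_mult_const: "D c = 0 \<Longrightarrow> (D ^^ n) (c * x) = c * (D ^^ n) x"
  by (induction n) (auto simp: D_mult_const)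

end

definition is_subring :: "'a::field set \<Rightarrow> bool" where
  "is_subring R \<longleftrightarrow> 0 \<in> R \<and> 1 \<in> R \<and> (\<forall>x\<in>R. \<forall>y\<in>R. x + y \<in> R \<and> x * y \<in> R) \<and> (\<forall>x\<in>R. - x \<in> R)"

lemma subfield_is_subring: "is_subfield F \<Longrightarrow> is_subring F"
  unfolding is_subfield_def is_subring_def by blast

context
  fixes R :: "'a::field set"
  assumes R: "is_subring R"
begin

lemma subring_0 [simp]: "0 \<in> R" using R unfolding is_subring_def by blast

lemma subring_1 [simp]: "1 \<in> R" using R unfolding is_subring_def by blast

lemma subring_add: "x \<in> R \<Longrightarrow> y \<in> R \<Longrightarrow> x + y \<in> R" using R unfolding is_subring_def by blast

lemma subring_mult: "x \<in> R \<Longrightarrow> y \<in> R \<Longrightarrow> x * y \<in> R" using R unfolding is_subring_def by blast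

lemma subring_uminus: "x \<in> R \<Longrightarrow> - x \<in> R" using R unfolding is_subring_def by blast

lemma subring_diff: "x \<in> R \<Longrightarrow> y \<in> R \<Longrightarrow> x - y \<in> R"
  using subring_add subring_uminus by (metis diff_conv_add_uminus)

lemma subring_power: "x \<in> R \<Longrightarrow> x ^ n \<in> R"
  by (induction n) (auto intro: subring_mult)

lemma subring_sum: "(\<And>i. i \<in> S \<Longrightarrow> f i \<in> R) \<Longrightarrow> (\<Sum>i\<in>S. f i) \<in> R"
  by (induction S rule: infinite_finite_induct) (auto intro: subring_add)

lemma subring_prod: "(\<And>i. i \<in> S \<Longrightarrow> f i \<in> R) \<Longrightarrow> (\<Prod>i\<in>S. f i) \<in> R"
  by (induction S rule: infinite_finite_induct) (auto intro: subring_mult)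

lemma subring_of_nat: "of_nat n \<in> R"
  by (induction n) (auto intro: subring_add)

end

lemma subfield_inverse: "is_subfield F \<Longrightarrow> x \<in> F \<Longrightarrow> inverse x \<in> F"
  unfolding is_subfield_def by blast

lemma subfield_divide: "is_subfield F \<Longrightarrow> x \<in> F \<Longrightarrow> y \<in> F \<Longrightarrow> x / y \<in> F"
  unfolding divide_inverse by (intro subring_mult[OF subfield_is_subring] subfield_inverse)

lemma field_gen_subfield: "is_subfield (field_gen S)"
  unfolding field_gen_def is_subfield_def by auto

lemma field_gen_subring: "is_subring (field_gen S)"
  by (rule subfield_is_subring[OF field_gen_subfield])

lemma field_gen_superset: "S \<subseteq> field_gen S"
  unfolding field_gen_def by auto

lemma field_gen_least: "is_subfield F \<Longrightarrow> S \<subseteq> F \<Longrightarrow> field_gen S \<subseteq> F"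
  unfolding field_gen_def by auto

lemma field_gen_mono: "S \<subseteq> T \<Longrightarrow> field_gen S \<subseteq> field_gen T"
  by (meson field_gen_least field_gen_subfield field_gen_superset order_trans)

lemma field_gen_idem: "is_subfield F \<Longrightarrow> field_gen F = F"
  by (simp add: field_gen_least field_gen_superset subset_antisym)

lemma field_gen_subset_iff: "field_gen S \<subseteq> field_gen T \<longleftrightarrow> S \<subseteq> field_gen T"
  by (meson field_gen_least field_gen_subfield field_gen_superset order_trans)

lemma field_gen_field_gen_Un: "field_gen (field_gen S \<union> T) = field_gen (S \<union> T)"
proof
  show "field_gen (field_gen S \<union> T) \<subseteq> field_gen (S \<union> T)"
    unfolding field_gen_subset_iff
    by (metis Un_least field_gen_mono field_gen_superset le_sup_iff order_trans sup_ge1 sup_ge2)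
  show "field_gen (S \<union> T) \<subseteq> field_gen (field_gen S \<union> T)"
    by (intro field_gen_mono) (use field_gen_superset in blast)
qed

lemma field_gen_insert_mem: "z \<in> field_gen S \<Longrightarrow> field_gen (insert z S) = field_gen S"
  by (metis field_gen_field_gen_Un field_gen_idem field_gen_subfield insert_absorb insert_is_Un sup_commute)

lemma field_gen_Un_image_lessThan_Suc:
  "field_gen (S \<union> y ` {..<Suc i}) = field_gen (field_gen (S \<union> y ` {..<i}) \<union> {y i})"
proof -
  have "S \<union> y ` {..<Suc i} = (S \<union> y ` {..<i}) \<union> {y i}" by (auto simp: lessThan_Suc)
  then show ?thesis by (metis field_gen_field_gen_Un)
qed

definition poly_over :: "'a::zero set \<Rightarrow> 'a poly \<Rightarrow> bool" where
  "poly_over R P \<longleftrightarrow> (\<forall>i. coeff P i \<in> R)"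

context
  fixes R :: "'a::field set"
  assumes R: "is_subring R"
begin

lemma poly_over_0 [simp]: "poly_over R 0"
  using R by (simp add: poly_over_def)

lemma poly_over_pCons [simp]: "poly_over R (pCons a p) \<longleftrightarrow> a \<in> R \<and> poly_over R p"
  unfolding poly_over_def by (metis coeff_pCons_0 coeff_pCons_Suc not0_implies_Suc)

lemma poly_over_1 [simp]: "poly_over R 1"
  using R by (simp add: one_pCons)

lemma poly_over_add: "poly_over R p \<Longrightarrow> poly_over R q \<Longrightarrow> poly_over R (p + q)"
  by (auto simp: poly_over_def intro: subring_add[OF R])

lemma poly_over_uminus: "poly_over R p \<Longrightarrow> poly_over R (- p)"
  by (auto simp: poly_over_def intro: subring_uminus[OF R])

lemma poly_over_diff: "poly_over R p \<Longrightarrow> poly_over R q \<Longrightarrow> poly_over R (p - q)"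
  by (auto simp: poly_over_def intro: subring_diff[OF R])

lemma poly_over_smult: "c \<in> R \<Longrightarrow> poly_over R p \<Longrightarrow> poly_over R (smult c p)"
  by (auto simp: poly_over_def intro: subring_mult[OF R])

lemma poly_over_monom: "c \<in> R \<Longrightarrow> poly_over R (monom c n)"
  using R by (auto simp: poly_over_def)

lemma poly_over_mult: "poly_over R p \<Longrightarrow> poly_over R q \<Longrightarrow> poly_over R (p * q)"
  by (auto simp: poly_over_def coeff_mult intro!: subring_sum[OF R] subring_mult[OF R])

lemma poly_over_power: "poly_over R p \<Longrightarrow> poly_over R (p ^ n)"
  by (induction n) (auto intro: poly_over_mult)

lemma poly_over_sum: "(\<And>i. i \<in> S \<Longrightarrow> poly_over R (f i)) \<Longrightarrow> poly_over R (\<Sum>i\<in>S. f i)"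
  by (induction S rule: infinite_finite_induct) (auto intro: poly_over_add)

lemma poly_over_pcompose: "poly_over R p \<Longrightarrow> poly_over R q \<Longrightarrow> poly_over R (pcompose p q)"
  by (induction p) (auto simp: pcompose_pCons intro!: poly_over_add poly_over_mult)

lemma poly_over_pderiv: "poly_over R p \<Longrightarrow> poly_over R (pderiv p)"
  by (auto simp: poly_over_def coeff_pderiv simp del: of_nat_Suc
      intro!: subring_mult[OF R] subring_of_nat[OF R])

lemma poly_over_poly: "poly_over R p \<Longrightarrow> x \<in> R \<Longrightarrow> poly p x \<in> R"
  by (auto simp: poly_over_def poly_altdef intro!: subring_sum[OF R] subring_mult[OF R] subring_power[OF R])

end

lemma poly_over_mono: "R \<subseteq> S \<Longrightarrow> poly_over R p \<Longrightarrow> poly_over S p"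
  by (auto simp: poly_over_def)

lemma not_algebraic_overD: "\<not> algebraic_over G w \<Longrightarrow> poly_over G P \<Longrightarrow> poly P w = 0 \<Longrightarrow> P = 0"
  unfolding algebraic_over_def poly_over_def by blast

lemma algebraic_over_mono: "algebraic_over G z \<Longrightarrow> G \<subseteq> H \<Longrightarrow> algebraic_over H z"
  unfolding algebraic_over_def by blast

lemma algebraic_over_mem: "is_subring G \<Longrightarrow> w \<in> G \<Longrightarrow> algebraic_over G w"
  unfolding algebraic_over_def
  by (rule exI[of _ "[:- w, 1:]"]) (auto simp: coeff_pCons subring_uminus split: nat.split)

lemma algebraic_over_diff_const:
  assumes R: "is_subring G" and alg: "algebraic_over G z" and c: "c \<in> G"
  shows "algebraic_over G (z - c)"
proof -
  obtain p where p: "p \<noteq> 0" "poly_over G p" "poly p z = 0"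
    using alg unfolding algebraic_over_def poly_over_def by blast
  have "pcompose p [:c, 1:] \<noteq> 0" using p(1) pcompose_eq_0[of p "[:c, 1:]"] by auto
  moreover have "poly_over G (pcompose p [:c, 1:])" using R p(2) c by (simp add: poly_over_pcompose)
  moreover have "poly (pcompose p [:c, 1:]) (z - c) = 0" using p(3) by (simp add: poly_pcompose)
  ultimately show ?thesis unfolding algebraic_over_def poly_over_def by blast
qed

lemma algebraic_over_monic_min_poly:
  assumes E: "is_subfield E" and alg: "algebraic_over E h"
  obtains P where "poly_over E P" "poly P h = 0" "lead_coeff P = 1"
    "\<And>Q. poly_over E Q \<Longrightarrow> Q \<noteq> 0 \<Longrightarrow> poly Q h = 0 \<Longrightarrow> degree P \<le> degree Q"
proof -
  let ?S = "{Q. poly_over E Q \<and> Q \<noteq> 0 \<and> poly Q h = 0}"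
  obtain Q0 where "Q0 \<in> ?S" using alg unfolding algebraic_over_def poly_over_def by blast
  then obtain P0 where P0: "P0 \<in> ?S" "\<forall>Q. Q \<in> ?S \<longrightarrow> degree P0 \<le> degree Q"
    using ex_has_least_nat[of "\<lambda>Q. Q \<in> ?S" Q0 degree] by blast
  define P where "P = smult (inverse (lead_coeff P0)) P0"
  have lc: "lead_coeff P0 \<in> E" "lead_coeff P0 \<noteq> 0" using P0(1) by (auto simp: poly_over_def)
  have "poly_over E P"
    unfolding P_def using lc P0(1)
    by (intro poly_over_smult[OF subfield_is_subring[OF E]] subfield_inverse[OF E]) auto
  moreover have "poly P h = 0" "lead_coeff P = 1" "degree P = degree P0"
    using P0(1) lc by (simp_all add: P_def lead_coeff_smult)
  ultimately show ?thesis using that P0(2) by simp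
qed

lemma not_algebraic_over_sum_powers:
  assumes "\<not> algebraic_over G w" "is_subring G" "finite S" "\<forall>j\<in>S. t j \<in> G"
    and "(\<Sum>j\<in>S. t j * w ^ j) = 0"
  shows "\<forall>j\<in>S. t j = 0"
proof -
  define P where "P = (\<Sum>j\<in>S. monom (t j) j)"
  have "poly_over G P" unfolding P_def using assms(2,4) by (auto intro!: poly_over_sum poly_over_monom)
  moreover have "poly P w = 0"
    unfolding P_def using assms(5) by (simp add: poly_sum poly_monom mult.commute)
  ultimately have "P = 0" using assms(1) not_algebraic_overD by blast
  moreover have "coeff P j = t j" if "j \<in> S" for j
    unfolding P_def coeff_sum using that assms(3) by (simp add: coeff_monom if_distrib sum.delta)
  ultimately show ?thesis by simp
qed

lemma not_algebraic_over_affine: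
  assumes "\<not> algebraic_over N w" "is_subring N" "a \<in> N" "a \<noteq> 0" "b \<in> N"
  shows "\<not> algebraic_over N (a * w + b)"
proof
  assume "algebraic_over N (a * w + b)"
  then obtain p where p: "p \<noteq> 0" "poly_over N p" "poly p (a * w + b) = 0"
    unfolding algebraic_over_def poly_over_def by blast
  have "poly_over N (pcompose p [:b, a:])" using assms(2-5) p(2) by (auto intro: poly_over_pcompose)
  moreover have "poly (pcompose p [:b, a:]) w = 0"
    using p(3) by (simp add: poly_pcompose algebra_simps)
  ultimately have "pcompose p [:b, a:] = 0" using assms(1) not_algebraic_overD by blast
  then show False using pcompose_eq_0[of p "[:b, a:]"] p(1) assms(4) by simp
qed

definition ring_adjoin :: "'a::field set \<Rightarrow> 'a \<Rightarrow> 'a set" where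
  "ring_adjoin G w = {poly P w | P. poly_over G P}"

lemma ring_adjoin_subring:
  assumes R: "is_subring G" shows "is_subring (ring_adjoin G w)"
proof -
  have mem: "poly P w \<in> ring_adjoin G w" if "poly_over G P" for P
    unfolding ring_adjoin_def using that by blast
  show ?thesis
    unfolding is_subring_def
  proof (intro conjI ballI)
    show "0 \<in> ring_adjoin G w" "1 \<in> ring_adjoin G w"
      using mem[of 0] mem[of 1] R by simp_all
  next
    fix x y assume "x \<in> ring_adjoin G w" "y \<in> ring_adjoin G w"
    then obtain P Q where "x = poly P w" "y = poly Q w" "poly_over G P" "poly_over G Q"
      unfolding ring_adjoin_def by blast
    then show "x + y \<in> ring_adjoin G w" "x * y \<in> ring_adjoin G w"
      using mem[of "P + Q"] mem[of "P * Q"] poly_over_add[OF R] poly_over_mult[OF R] by auto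
  next
    fix x assume "x \<in> ring_adjoin G w"
    then obtain P where "x = poly P w" "poly_over G P" unfolding ring_adjoin_def by blast
    then show "- x \<in> ring_adjoin G w" using mem[of "- P"] poly_over_uminus[OF R] by auto
  qed
qed

lemma ring_adjoin_superset: "is_subring G \<Longrightarrow> G \<subseteq> ring_adjoin G w"
  unfolding ring_adjoin_def by (auto intro!: exI[of _ "[:_:]"])

lemma ring_adjoin_mem: "is_subring G \<Longrightarrow> w \<in> ring_adjoin G w"
  unfolding ring_adjoin_def by (auto intro!: exI[of _ "[:0, 1:]"])

lemma ring_adjoin_least:
  assumes "is_subring R" "G \<subseteq> R" "w \<in> R" shows "ring_adjoin G w \<subseteq> R"
  unfolding ring_adjoin_def using assms poly_over_mono poly_over_poly by blast

definition fractions :: "'a::field set \<Rightarrow> 'a set" where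
  "fractions R = {p / q | p q. p \<in> R \<and> q \<in> R \<and> q \<noteq> 0}"

lemma fractions_subfield:
  assumes R: "is_subring R" shows "is_subfield (fractions R)"
proof -
  have mem: "a / b \<in> fractions R" if "a \<in> R" "b \<in> R" "b \<noteq> 0" for a b
    unfolding fractions_def using that by blast
  show ?thesis
    unfolding is_subfield_def
  proof (intro conjI ballI)
    show "0 \<in> fractions R" "1 \<in> fractions R" using mem[of 0 1] mem[of 1 1] R by simp_all
  next
    fix x y assume "x \<in> fractions R" "y \<in> fractions R"
    then obtain p q p' q' where x: "x = p / q" "p \<in> R" "q \<in> R" "q \<noteq> 0"
      and y: "y = p' / q'" "p' \<in> R" "q' \<in> R" "q' \<noteq> 0" unfolding fractions_def by blast
    have "x + y = (p * q' + p' * q) / (q * q')" using x y by (simp add: field_simps)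
    moreover have "x * y = (p * p') / (q * q')" using x y by simp
    ultimately show "x + y \<in> fractions R" "x * y \<in> fractions R"
      using x y mem subring_add[OF R] subring_mult[OF R] by (metis mult_eq_0_iff)+
  next
    fix x assume "x \<in> fractions R"
    then obtain p q where x: "x = p / q" "p \<in> R" "q \<in> R" "q \<noteq> 0" unfolding fractions_def by blast
    show "- x \<in> fractions R" using x mem[of "- p" q] subring_uminus[OF R] by simp
    show "inverse x \<in> fractions R"
      using x mem[of q p] mem[of 0 1] R by (cases "p = 0") simp_all
  qed
qed

lemma fractions_superset: "is_subring R \<Longrightarrow> R \<subseteq> fractions R"
  unfolding fractions_def by (force intro: exI[of _ 1])

lemma field_gen_eq_fractions:
  assumes R: "is_subring R" and "S \<subseteq> R" "R \<subseteq> field_gen S"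
  shows "field_gen S = fractions R"
proof
  show "field_gen S \<subseteq> fractions R"
    using assms fractions_subfield fractions_superset field_gen_least by (metis order_trans)
  show "fractions R \<subseteq> field_gen S"
    using assms(3) subfield_divide[OF field_gen_subfield] unfolding fractions_def by blast
qed

lemma field_gen_insert_eq_fractions:
  assumes G: "is_subfield G" shows "field_gen (G \<union> {w}) = fractions (ring_adjoin G w)"
proof (rule field_gen_eq_fractions)
  have R: "is_subring G" using G subfield_is_subring by blast
  show "is_subring (ring_adjoin G w)" using ring_adjoin_subring[OF R] .
  show "G \<union> {w} \<subseteq> ring_adjoin G w" using ring_adjoin_superset[OF R] ring_adjoin_mem[OF R] by blast
  show "ring_adjoin G w \<subseteq> field_gen (G \<union> {w})"
    using field_gen_superset[of "G \<union> {w}"] by (intro ring_adjoin_least[OF field_gen_subring]) auto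
qed

lemma field_gen_insert_affine:
  assumes G: "is_subfield G" and ab: "a \<in> G" "a \<noteq> 0" "b \<in> G"
  shows "field_gen (G \<union> {a * w + b}) = field_gen (G \<union> {w})"
proof -
  have R: "is_subring (field_gen S)" for S by (rule field_gen_subring)
  have "a * w + b \<in> field_gen (G \<union> {w})"
    using ab field_gen_superset[of "G \<union> {w}"] by (blast intro: subring_add[OF R] subring_mult[OF R])
  moreover have "w \<in> field_gen (G \<union> {a * w + b})"
  proof -
    have "a \<in> field_gen (G \<union> {a * w + b})" "b \<in> field_gen (G \<union> {a * w + b})"
      "a * w + b \<in> field_gen (G \<union> {a * w + b})"
      using ab field_gen_superset[of "G \<union> {a * w + b}"] by auto
    then have "(a * w + b - b) / a \<in> field_gen (G \<union> {a * w + b})"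
      by (intro subfield_divide[OF field_gen_subfield] subring_diff[OF R])
    then show ?thesis using ab(2) by simp
  qed
  moreover have "G \<subseteq> field_gen (G \<union> {w})" "G \<subseteq> field_gen (G \<union> {a * w + b})"
    using field_gen_superset by blast+
  ultimately show ?thesis by (intro subset_antisym) (simp_all add: field_gen_subset_iff)
qed

lemma common_denominator:
  fixes N :: nat
  assumes R: "is_subring R" and "\<forall>j<N. f j \<in> fractions R"
  shows "\<exists>q\<in>R. q \<noteq> 0 \<and> (\<forall>j<N. q * f j \<in> R)"
  using assms(2)
proof (induction N)
  case 0 then show ?case using R by (auto intro!: bexI[of _ 1])
next
  case (Suc N)
  then obtain q where q: "q \<in> R" "q \<noteq> 0" "\<forall>j<N. q * f j \<in> R" by auto
  from Suc.prems obtain p' q' where pq: "f N = p' / q'" "p' \<in> R" "q' \<in> R" "q' \<noteq> 0"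
    unfolding fractions_def by blast
  have "(q * q') * f j \<in> R" if "j < Suc N" for j
  proof (cases "j = N")
    case True
    then show ?thesis using pq q subring_mult[OF R] by auto
  next
    case False
    then have "(q * q') * f j = q' * (q * f j)" "q * f j \<in> R" using q that by simp_all
    then show ?thesis using pq R by (metis subring_mult)
  qed
  then show ?case using q pq subring_mult[OF R] by (auto intro!: bexI[of _ "q * q'"])
qed

section \<open>Transcendental elements\<close>

lemma alg_indep_0: "alg_indep k 0 y"
  unfolding alg_indep_def
proof (intro allI impI ballI)
  fix E c e
  assume H: "finite E \<and> (\<forall>e\<in>E. \<forall>i\<ge>0. e i = 0) \<and> (\<forall>e\<in>E. c e \<in> k) \<and>
      (\<Sum>e\<in>E. c e * (\<Prod>i<0. y i ^ e i)) = 0" and e: "e \<in> E"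
  have "e' = (\<lambda>_. 0)" if "e' \<in> E" for e'
    using H that by (intro ext) (meson zero_le)
  then have "E = {e}" using e by blast
  then show "c e = 0" using H by simp
qed

lemma alg_indep_fiber:
  assumes indep: "alg_indep k r y" and E: "finite E" "\<forall>e\<in>E. \<forall>i>r. e i = 0" "\<forall>e\<in>E. e r = d"
    and c: "\<forall>e\<in>E. c e \<in> k" and rel: "(\<Sum>e\<in>E. c e * (\<Prod>i<r. y i ^ e i)) = 0"
  shows "\<forall>e\<in>E. c e = 0"
proof -
  let ?h = "\<lambda>e::nat \<Rightarrow> nat. e(r := 0)"
  have inj: "inj_on ?h E"
  proof (rule inj_onI, rule ext)
    fix a b i assume "a \<in> E" "b \<in> E" "a(r := 0) = b(r := 0)"
    moreover have "a r = b r" using E(3) \<open>a \<in> E\<close> \<open>b \<in> E\<close> by metis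
    ultimately show "a i = b i" by (metis fun_upd_other)
  qed
  define c' where "c' = c \<circ> inv_into E ?h"
  have c'h: "c' (?h e) = c e" if "e \<in> E" for e
    unfolding c'_def using inv_into_f_f[OF inj that] by simp
  have "(\<Sum>e\<in>?h ` E. c' e * (\<Prod>i<r. y i ^ e i)) = (\<Sum>e\<in>E. c' (?h e) * (\<Prod>i<r. y i ^ (?h e) i))"
    by (rule sum.reindex[OF inj, unfolded comp_def])
  also have "\<dots> = 0" using rel c'h by simp
  finally have "(\<Sum>e\<in>?h ` E. c' e * (\<Prod>i<r. y i ^ e i)) = 0" .
  moreover have "\<forall>e\<in>?h ` E. \<forall>i\<ge>r. e i = 0" using E(2) by (auto simp: nat_less_le)
  moreover have "\<forall>e\<in>?h ` E. c' e \<in> k" using c c'h by auto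
  moreover have "finite (?h ` E)" using E(1) by blast
  ultimately have "\<forall>e\<in>?h ` E. c' e = 0"
    using indep unfolding alg_indep_def by blast
  then show ?thesis using c'h by auto
qed

lemma sum_monomials_group_last:
  fixes c :: "(nat \<Rightarrow> nat) \<Rightarrow> 'a::comm_ring_1"
  assumes "finite E"
  shows "(\<Sum>e\<in>E. c e * (\<Prod>i<Suc r. y i ^ e i)) =
    (\<Sum>d\<in>(\<lambda>e. e r) ` E. (\<Sum>e\<in>{e \<in> E. e r = d}. c e * (\<Prod>i<r. y i ^ e i)) * y r ^ d)"
proof -
  have "(\<Sum>e\<in>E. c e * (\<Prod>i<Suc r. y i ^ e i)) = (\<Sum>e\<in>E. c e * (\<Prod>i<r. y i ^ e i) * y r ^ e r)"
    by (simp add: mult.assoc)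
  also have "\<dots> = (\<Sum>d\<in>(\<lambda>e. e r) ` E. \<Sum>e\<in>{e \<in> E. e r = d}. c e * (\<Prod>i<r. y i ^ e i) * y r ^ e r)"
    by (rule sum.group[symmetric]) (use assms in auto)
  also have "\<dots> = (\<Sum>d\<in>(\<lambda>e. e r) ` E. (\<Sum>e\<in>{e \<in> E. e r = d}. c e * (\<Prod>i<r. y i ^ e i)) * y r ^ d)"
    unfolding sum_distrib_right by (intro sum.cong refl) auto
  finally show ?thesis .
qed

lemma alg_indep_Suc:
  assumes indep: "alg_indep k r y" and tr: "\<not> algebraic_over (field_gen (k \<union> y ` {..<r})) (y r)"
  shows "alg_indep k (Suc r) y"
  unfolding alg_indep_def
proof (intro allI impI ballI)
  fix E c e0
  assume H: "finite E \<and> (\<forall>e\<in>E. \<forall>i\<ge>Suc r. e i = 0) \<and> (\<forall>e\<in>E. c e \<in> k) \<and>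
      (\<Sum>e\<in>E. c e * (\<Prod>i<Suc r. y i ^ e i)) = 0" and e0: "e0 \<in> E"
  let ?G = "field_gen (k \<union> y ` {..<r})"
  define b where "b d = (\<Sum>e\<in>{e \<in> E. e r = d}. c e * (\<Prod>i<r. y i ^ e i))" for d
  have "b d \<in> ?G" for d
    unfolding b_def using H field_gen_superset[of "k \<union> y ` {..<r}"]
    by (intro subring_sum[OF field_gen_subring] subring_mult[OF field_gen_subring]
        subring_prod[OF field_gen_subring] subring_power[OF field_gen_subring]) auto
  moreover have "(\<Sum>d\<in>(\<lambda>e. e r) ` E. b d * y r ^ d) = 0"
    using H sum_monomials_group_last[where c=c and r=r and y=y and E=E] unfolding b_def by argo
  ultimately have "b (e0 r) = 0"
    using not_algebraic_over_sum_powers[OF tr field_gen_subring] H e0 by blast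
  then have "\<forall>e\<in>{e \<in> E. e r = e0 r}. c e = 0"
    using H unfolding b_def by (intro alg_indep_fiber[OF indep]) auto
  then show "c e0 = 0" using e0 by blast
qed

lemma alg_indep_transcendence_tower:
  assumes "\<forall>i<r. \<not> algebraic_over (field_gen (k \<union> y ` {..<i})) (y i)"
  shows "alg_indep k r y"
  using assms by (induction r) (simp_all add: alg_indep_0 alg_indep_Suc)

lemma sum_poly_nonzero_if_degrees_distinct:
  fixes g :: "'b \<Rightarrow> 'a::idom poly"
  assumes S: "finite S" "i0 \<in> S" "g i0 \<noteq> 0"
    and inj: "inj_on (\<lambda>i. degree (g i)) {i \<in> S. g i \<noteq> 0}"
  shows "(\<Sum>i\<in>S. g i) \<noteq> 0"
proof -
  define d where "d = Max ((\<lambda>i. degree (g i)) ` {i \<in> S. g i \<noteq> 0})"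
  have "d \<in> (\<lambda>i. degree (g i)) ` {i \<in> S. g i \<noteq> 0}" unfolding d_def using S by (intro Max_in) auto
  then obtain j where j: "j \<in> S" "g j \<noteq> 0" "degree (g j) = d" by auto
  have others: "coeff (g i) d = 0" if "i \<in> S - {j}" for i
  proof (cases "g i = 0")
    case False
    have "degree (g i) \<le> d" unfolding d_def using S(1) that False by (intro Max_ge) auto
    moreover have "degree (g i) \<noteq> d" using inj j that False unfolding inj_on_def by auto
    ultimately show ?thesis by (simp add: coeff_eq_0)
  qed simp
  have "coeff (\<Sum>i\<in>S. g i) d = coeff (g j) d + (\<Sum>i\<in>S - {j}. coeff (g i) d)"
    unfolding coeff_sum using S(1) j(1) by (rule sum.remove)
  also have "\<dots> = lead_coeff (g j)" using others j(3) by simp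
  finally show ?thesis using j(2) by auto
qed

lemma degree_eq_if_homogeneous_relation:
  fixes P Q p :: "'a::field poly"
  assumes nz: "P \<noteq> 0" "Q \<noteq> 0" "p \<noteq> 0"
    and rel: "(\<Sum>i\<le>degree p. smult (coeff p i) (P ^ i * Q ^ (degree p - i))) = 0"
  shows "degree P = degree Q"
proof (rule ccontr)
  assume ne: "degree P \<noteq> degree Q"
  define m where "m = degree p"
  define g where "g i = smult (coeff p i) (P ^ i * Q ^ (m - i))" for i
  have deg: "int (degree (g i)) = int m * int (degree Q) + int i * (int (degree P) - int (degree Q))"
    if "i \<le> m" "g i \<noteq> 0" for i
  proof -
    have "degree (g i) = i * degree P + (m - i) * degree Q"
      using nz that by (simp add: g_def degree_mult_eq degree_power_eq)
    then show ?thesis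
      using that(1) by (simp only: of_nat_add of_nat_mult of_nat_diff) (simp add: algebra_simps)
  qed
  have "inj_on (\<lambda>i. degree (g i)) {i \<in> {..m}. g i \<noteq> 0}"
  proof (rule inj_onI)
    fix i j assume i: "i \<in> {i \<in> {..m}. g i \<noteq> 0}" and j: "j \<in> {i \<in> {..m}. g i \<noteq> 0}"
      and eq: "degree (g i) = degree (g j)"
    have "int (degree (g i)) = int (degree (g j))" using eq by simp
    then have "degree P = degree Q \<or> j = i" using deg[of i] deg[of j] i j by simp
    then show "i = j" using ne by blast
  qed
  moreover have "g m \<noteq> 0" using nz by (simp add: g_def m_def)
  ultimately have "(\<Sum>i\<le>m. g i) \<noteq> 0" by (intro sum_poly_nonzero_if_degrees_distinct) auto
  then show False using rel by (simp add: g_def m_def)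
qed

lemma degree_eq_if_algebraic_fraction:
  assumes G: "is_subfield G" and PQ: "poly_over G P" "poly_over G Q" "poly Q w \<noteq> 0" "P \<noteq> 0"
    and alg: "algebraic_over G (poly P w / poly Q w)" and tr: "\<not> algebraic_over G w"
  shows "degree P = degree Q"
proof -
  have R: "is_subring G" using G subfield_is_subring by blast
  obtain p where p: "p \<noteq> 0" "poly_over G p" "poly p (poly P w / poly Q w) = 0"
    using alg unfolding algebraic_over_def poly_over_def by blast
  define m where "m = degree p"
  define H where "H = (\<Sum>i\<le>m. smult (coeff p i) (P ^ i * Q ^ (m - i)))"
  let ?a = "poly P w" and ?q = "poly Q w"
  have "poly H w = (\<Sum>i\<le>m. ?q ^ m * (coeff p i * (?a / ?q) ^ i))"
    unfolding H_def poly_sum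
  proof (intro sum.cong refl)
    fix i assume "i \<in> {..m}"
    then have "?q ^ m = ?q ^ i * ?q ^ (m - i)" by (simp add: power_add[symmetric])
    then show "poly (smult (coeff p i) (P ^ i * Q ^ (m - i))) w = ?q ^ m * (coeff p i * (?a / ?q) ^ i)"
      using PQ(3) by (simp add: power_divide field_simps)
  qed
  also have "\<dots> = ?q ^ m * poly p (?a / ?q)"
    by (simp add: poly_altdef m_def sum_distrib_left)
  finally have "poly H w = 0" using p by simp
  moreover have "poly_over G H" unfolding H_def using p(2) PQ R
    by (intro poly_over_sum poly_over_smult poly_over_mult poly_over_power) (auto simp: poly_over_def)
  ultimately have "H = 0" using tr not_algebraic_overD by blast
  moreover have "Q \<noteq> 0" using PQ(3) by auto
  ultimately show ?thesis
    using degree_eq_if_homogeneous_relation[OF PQ(4) _ p(1)] unfolding H_def m_def by blast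
qed

lemma rel_alg_closed_in_simple_transcendental:
  assumes G: "is_subfield G" and tr: "\<not> algebraic_over G w"
  shows "rel_alg_closed_in G (field_gen (G \<union> {w}))"
  unfolding rel_alg_closed_in_def
proof (intro ballI impI)
  fix z assume z: "z \<in> field_gen (G \<union> {w})" and alg: "algebraic_over G z"
  have R: "is_subring G" using G subfield_is_subring by blast
  obtain P Q where PQ: "z = poly P w / poly Q w" "poly_over G P" "poly_over G Q" "poly Q w \<noteq> 0"
    using z field_gen_insert_eq_fractions[OF G] unfolding fractions_def ring_adjoin_def by blast
  show "z \<in> G"
  proof (cases "P = 0")
    case False
    define c where "c = lead_coeff P / lead_coeff Q"
    have c: "c \<in> G" unfolding c_def using PQ G by (intro subfield_divide) (auto simp: poly_over_def)
    define P' where "P' = P - smult c Q"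
    have P': "poly_over G P'" unfolding P'_def using PQ c by (simp add: poly_over_diff[OF R] poly_over_smult[OF R])
    have zc: "z - c = poly P' w / poly Q w" using PQ by (simp add: P'_def field_simps)
    have deg: "degree P = degree Q"
      using degree_eq_if_algebraic_fraction[OF G PQ(2-4) False _ tr] PQ(1) alg by simp
    have "P' = 0"
    proof (rule ccontr)
      assume P'0: "P' \<noteq> 0"
      have "Q \<noteq> 0" using PQ(4) by auto
      then have "coeff P' (degree Q) = 0" using deg unfolding P'_def c_def by simp
      moreover have "degree P' \<le> degree Q"
        unfolding P'_def using deg degree_smult_le by (intro degree_diff_le) auto
      ultimately have "degree P' < degree Q" using P'0 by (metis le_neq_implies_less leading_coeff_0_iff)
      moreover have "degree P' = degree Q"
        using degree_eq_if_algebraic_fraction[OF G P' PQ(3,4) P'0 _ tr]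
          algebraic_over_diff_const[OF R alg c] zc by simp
      ultimately show False by simp
    qed
    then show ?thesis using zc c by simp
  qed (use PQ R in simp)
qed

lemma rel_alg_closed_in_transcendence_tower:
  fixes s :: nat
  assumes H: "is_subfield H"
    and tr: "\<forall>i<s. \<not> algebraic_over (field_gen (H \<union> y ` {..<i})) (y i)"
  shows "rel_alg_closed_in H (field_gen (H \<union> y ` {..<s}))"
  using tr
proof (induction s)
  case 0 then show ?case using field_gen_idem[OF H] by (simp add: rel_alg_closed_in_def)
next
  case (Suc s)
  let ?Hs = "field_gen (H \<union> y ` {..<s})"
  show ?case
    unfolding rel_alg_closed_in_def
  proof (intro ballI impI)
    fix z assume z: "z \<in> field_gen (H \<union> y ` {..<Suc s})" and alg: "algebraic_over H z"
    have "rel_alg_closed_in ?Hs (field_gen (?Hs \<union> {y s}))"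
      using Suc.prems by (intro rel_alg_closed_in_simple_transcendental field_gen_subfield) simp
    moreover have "algebraic_over ?Hs z"
      using field_gen_superset[of "H \<union> y ` {..<s}"] by (intro algebraic_over_mono[OF alg]) blast
    ultimately have "z \<in> ?Hs"
      using z unfolding rel_alg_closed_in_def field_gen_Un_image_lessThan_Suc by blast
    then show "z \<in> H" using Suc alg unfolding rel_alg_closed_in_def by simp
  qed
qed

lemma poly_altdef_degree_le:
  fixes P :: "'a::comm_semiring_1 poly"
  assumes "degree P \<le> M" shows "poly P x = (\<Sum>j\<le>M. coeff P j * x ^ j)"
proof -
  have "poly P x = (\<Sum>j\<le>degree P. coeff P j * x ^ j)" by (rule poly_altdef)
  also have "\<dots> = (\<Sum>j\<le>M. coeff P j * x ^ j)"
    using assms by (intro sum.mono_neutral_left) (auto simp: coeff_eq_0)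
  finally show ?thesis .
qed

lemma not_algebraic_pair_poly_eq_0:
  assumes G: "is_subring G" and tru: "\<not> algebraic_over G u"
    and trf: "\<not> algebraic_over (field_gen (G \<union> {u})) f"
    and C: "\<forall>i\<le>m. poly_over G (C i)" and rel: "(\<Sum>i\<le>m. poly (C i) f * u ^ i) = 0"
  shows "\<forall>i\<le>m. C i = 0"
proof -
  define M where "M = Max ((\<lambda>i. degree (C i)) ` {..m})"
  have degC: "degree (C i) \<le> M" if "i \<le> m" for i unfolding M_def using that by (intro Max_ge) auto
  define t where "t j = (\<Sum>i\<le>m. coeff (C i) j * u ^ i)" for j
  have "(\<Sum>i\<le>m. poly (C i) f * u ^ i) = (\<Sum>i\<le>m. \<Sum>j\<le>M. coeff (C i) j * f ^ j * u ^ i)"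
    using poly_altdef_degree_le[OF degC] by (simp add: sum_distrib_right)
  also have "\<dots> = (\<Sum>j\<le>M. \<Sum>i\<le>m. coeff (C i) j * f ^ j * u ^ i)" by (rule sum.swap)
  also have "\<dots> = (\<Sum>j\<le>M. t j * f ^ j)" unfolding t_def sum_distrib_right by (simp add: mult_ac)
  finally have "(\<Sum>j\<le>M. t j * f ^ j) = 0" using rel by simp
  moreover have "t j \<in> field_gen (G \<union> {u})" for j
    using C field_gen_superset[of "G \<union> {u}"] unfolding t_def poly_over_def
    by (intro subring_sum[OF field_gen_subring] subring_mult[OF field_gen_subring]
        subring_power[OF field_gen_subring]) auto
  ultimately have t0: "\<forall>j\<le>M. t j = 0"
    using not_algebraic_over_sum_powers[OF trf field_gen_subring, of "{..M}" t] by simp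
  have "coeff (C i) j = 0" if "i \<le> m" for i j
  proof (cases "j \<le> M")
    case True
    have "\<forall>i\<le>m. coeff (C i) j \<in> G" using C by (simp add: poly_over_def)
    then show ?thesis
      using not_algebraic_over_sum_powers[OF tru G, of "{..m}" "\<lambda>i. coeff (C i) j"] t0 True that
      unfolding t_def by simp
  next
    case False
    then show ?thesis using degC[OF that] by (simp add: coeff_eq_0)
  qed
  then show ?thesis by (simp add: poly_eqI)
qed

lemma not_algebraic_over_exchange:
  assumes G: "is_subfield G" and tru: "\<not> algebraic_over G u"
    and trf: "\<not> algebraic_over (field_gen (G \<union> {u})) f"
  shows "\<not> algebraic_over (field_gen (G \<union> {f})) u"
proof
  assume "algebraic_over (field_gen (G \<union> {f})) u"
  then obtain p where p: "p \<noteq> 0" "\<forall>i. coeff p i \<in> field_gen (G \<union> {f})" "poly p u = 0"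
    unfolding algebraic_over_def by blast
  have R: "is_subring G" using G by (rule subfield_is_subring)
  define m where "m = degree p"
  obtain b where b: "b \<noteq> 0" "\<forall>j<Suc m. b * coeff p j \<in> ring_adjoin G f"
    using common_denominator[OF ring_adjoin_subring[OF R], of "Suc m" "coeff p" f] p(2)
    unfolding field_gen_insert_eq_fractions[OF G] by blast
  have "\<exists>P. poly_over G P \<and> poly P f = b * coeff p i" if "i \<le> m" for i
  proof -
    have "b * coeff p i \<in> ring_adjoin G f" using b(2) that by simp
    then show ?thesis unfolding ring_adjoin_def by force
  qed
  then obtain C where C: "\<And>i. i \<le> m \<Longrightarrow> poly_over G (C i) \<and> poly (C i) f = b * coeff p i"
    by metis
  have "(\<Sum>i\<le>m. poly (C i) f * u ^ i) = (\<Sum>i\<le>m. b * (coeff p i * u ^ i))"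
    using C by (intro sum.cong) auto
  also have "\<dots> = b * poly p u" by (simp add: poly_altdef m_def sum_distrib_left)
  finally have "(\<Sum>i\<le>m. poly (C i) f * u ^ i) = 0" using p(3) by simp
  then have "\<forall>i\<le>m. C i = 0" using C by (intro not_algebraic_pair_poly_eq_0[OF R tru trf]) auto
  then have "C m = 0" by simp
  then show False using C[of m] b(1) p(1) by (simp add: m_def)
qed

lemma rel_alg_closed_in_transcendence_tower_last:
  fixes y :: "nat \<Rightarrow> 'a::field"
  assumes r: "1 \<le> r" and tr: "\<forall>i<r. \<not> algebraic_over (field_gen (k \<union> y ` {..<i})) (y i)"
  shows "rel_alg_closed_in (field_gen (k \<union> {y (r - 1)})) (field_gen (k \<union> y ` {..<r}))"
proof -
  let ?f = "y (r - 1)" and ?G = "\<lambda>i. field_gen (k \<union> y ` {..<i})"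
  have H: "field_gen (field_gen (k \<union> {?f}) \<union> y ` {..<i}) = field_gen (?G i \<union> {?f})" for i
  proof -
    have "k \<union> {?f} \<union> y ` {..<i} = (k \<union> y ` {..<i}) \<union> {?f}" by blast
    then show ?thesis by (simp only: field_gen_field_gen_Un)
  qed
  have "\<not> algebraic_over (field_gen (field_gen (k \<union> {?f}) \<union> y ` {..<i})) (y i)" if "i < r - 1" for i
  proof -
    have "?G (Suc i) \<subseteq> ?G (r - 1)" using that by (intro field_gen_mono) auto
    moreover have "\<not> algebraic_over (?G (r - 1)) ?f" using tr r by simp
    ultimately have "\<not> algebraic_over (?G (Suc i)) ?f" using algebraic_over_mono by blast
    then have "\<not> algebraic_over (field_gen (?G i \<union> {y i})) ?f"
      by (simp add: field_gen_Un_image_lessThan_Suc)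
    moreover have "\<not> algebraic_over (?G i) (y i)" using tr that by simp
    ultimately show ?thesis unfolding H using not_algebraic_over_exchange[OF field_gen_subfield] by blast
  qed
  then have "rel_alg_closed_in (field_gen (k \<union> {?f})) (field_gen (field_gen (k \<union> {?f}) \<union> y ` {..<r - 1}))"
    by (intro rel_alg_closed_in_transcendence_tower field_gen_subfield) simp
  moreover have "field_gen (field_gen (k \<union> {?f}) \<union> y ` {..<r - 1}) = field_gen (k \<union> y ` {..<r})"
    using r field_gen_Un_image_lessThan_Suc[of k y "r - 1"] unfolding H by simp
  ultimately show ?thesis by simp
qed

section \<open>Differential fields\<close>

lemma diff_field_gen_diff_subfield: "is_diff_subfield D (diff_field_gen D S)"
  unfolding is_diff_subfield_def is_subfield_def diff_field_gen_def by auto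

lemma diff_field_gen_superset: "S \<subseteq> diff_field_gen D S"
  unfolding diff_field_gen_def by auto

lemma diff_field_gen_least: "is_diff_subfield D F \<Longrightarrow> S \<subseteq> F \<Longrightarrow> diff_field_gen D S \<subseteq> F"
  unfolding diff_field_gen_def by auto

lemma diff_field_gen_idem: "is_diff_subfield D F \<Longrightarrow> diff_field_gen D F = F"
  using diff_field_gen_least diff_field_gen_superset by blast

context derivation
begin

lemma field_gen_D_closed:
  assumes "\<forall>s\<in>S. D s \<in> field_gen S"
  shows "\<forall>z\<in>field_gen S. D z \<in> field_gen S"
proof -
  let ?G = "field_gen S"
  let ?H = "{z \<in> ?G. D z \<in> ?G}"
  have R: "is_subring ?G" by (rule field_gen_subring)
  have "is_subfield ?H"
    unfolding is_subfield_def
  proof (intro conjI ballI)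
    show "0 \<in> ?H" "1 \<in> ?H" using R by auto
  next
    fix x y assume "x \<in> ?H" "y \<in> ?H"
    then show "x + y \<in> ?H" "x * y \<in> ?H"
      by (auto simp: D_add D_mult intro!: subring_add[OF R] subring_mult[OF R])
  next
    fix x assume "x \<in> ?H"
    then show "- x \<in> ?H" "inverse x \<in> ?H"
      by (auto simp: D_uminus D_inverse intro!: subring_uminus[OF R] subring_mult[OF R]
          subring_power[OF R] subfield_inverse[OF field_gen_subfield])
  qed
  moreover have "S \<subseteq> ?H" using assms field_gen_superset by blast
  ultimately have "?G \<subseteq> ?H" by (rule field_gen_least)
  then show ?thesis by blast
qed

lemma diff_field_gen_eq_field_gen:
  assumes "\<forall>s\<in>S. D s \<in> field_gen S"
  shows "diff_field_gen D S = field_gen S"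
proof
  have "is_diff_subfield D (field_gen S)"
    unfolding is_diff_subfield_def using field_gen_subfield field_gen_D_closed[OF assms] by blast
  then show "diff_field_gen D S \<subseteq> field_gen S"
    using diff_field_gen_least field_gen_superset by blast
  show "field_gen S \<subseteq> diff_field_gen D S"
    unfolding diff_field_gen_def is_diff_subfield_def using field_gen_least by blast
qed

abbreviation C :: "'a set" where "C \<equiv> constants_of D UNIV"

lemma mem_C_iff [simp]: "c \<in> C \<longleftrightarrow> D c = 0"
  by (simp add: constants_of_def)

lemma C_subring: "is_subring C"
  unfolding is_subring_def by (auto simp: D_add D_mult D_uminus)

definition Dpoly :: "'a \<Rightarrow> 'a poly \<Rightarrow> 'a poly" where
  "Dpoly w P = map_poly D P + pderiv P * [:D w:]"

lemma coeff_Dpoly: "coeff (Dpoly w P) i = D (coeff P i) + of_nat (Suc i) * coeff P (Suc i) * D w"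
  by (simp add: Dpoly_def coeff_map_poly coeff_pderiv)

lemma D_poly: "D (poly P w) = poly (Dpoly w P) w"
proof (induction P)
  case (pCons a p)
  then show ?case
    by (simp add: Dpoly_def D_add D_mult map_poly_pCons pderiv_pCons algebra_simps)
qed (simp add: Dpoly_def)

lemma degree_Dpoly_le: "degree (Dpoly w P) \<le> degree P"
  by (rule degree_le) (auto simp: coeff_Dpoly coeff_eq_0)

lemma coeff_Dpoly_degree: "coeff (Dpoly w P) (degree P) = D (lead_coeff P)"
  by (simp add: coeff_Dpoly coeff_eq_0)

lemma poly_over_Dpoly:
  assumes R: "is_subring R" and "\<forall>z\<in>R. D z \<in> R" "D w \<in> R" "poly_over R P"
  shows "poly_over R (Dpoly w P)"
  using assms
  by (auto simp: poly_over_def coeff_Dpoly simp del: of_nat_Suc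
      intro!: subring_add[OF R] subring_mult[OF R] subring_of_nat[OF R])

lemma Dpoly_over_C: "poly_over C P \<Longrightarrow> D w = 1 \<Longrightarrow> Dpoly w P = pderiv P"
  by (auto simp: Dpoly_def poly_over_def coeff_map_poly intro!: poly_eqI)

end

locale same_constants = derivation +
  fixes k :: "'a set"
  assumes k_diff_subfield: "is_diff_subfield D k"
    and constants_k: "constants_of D k = constants_of D UNIV"
begin

lemma k_subfield: "is_subfield k"
  using k_diff_subfield unfolding is_diff_subfield_def by blast

lemma k_subring: "is_subring k"
  using subfield_is_subring k_subfield by blast

lemma D_mem_k: "z \<in> k \<Longrightarrow> D z \<in> k"
  using k_diff_subfield unfolding is_diff_subfield_def by blast

lemma C_subset_k: "C \<subseteq> k"
  using constants_k unfolding constants_of_def by blast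

lemma const_mem_k: "D c = 0 \<Longrightarrow> c \<in> k"
  using C_subset_k by auto

text \<open>If the top coefficient of \<open>Dpoly w P\<close> vanishes, the leading coefficient \<open>c\<close> of \<open>P\<close> is a
  constant, and the next one is the derivative of \<open>c' + d c w\<close>, where \<open>c'\<close> is the next coefficient of
  \<open>P\<close> and \<open>d = deg P\<close>; comparing antiderivatives solves for \<open>w\<close>.\<close>

lemma mem_if_Dpoly_top_coeffs:
  assumes N: "is_subfield N" "k \<subseteq> N" and P: "poly_over N P" "degree P \<noteq> 0"
    and top: "coeff (Dpoly w P) (degree P) = 0"
    and below_top: "coeff (Dpoly w P) (degree P - 1) = D t" "t \<in> N"
  shows "w \<in> N"
proof -
  have R: "is_subring N" using N(1) by (rule subfield_is_subring)
  define d where "d = degree P"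
  have d: "Suc (d - 1) = d" "(of_nat d :: 'a) \<noteq> 0" using P(2) by (simp_all add: d_def)
  have lead: "D (lead_coeff P) = 0" using top coeff_Dpoly_degree[of w P] by simp
  define c where "c = coeff P (d - 1) + of_nat d * lead_coeff P * w - t"
  have "D c = 0"
    using below_top(1) coeff_Dpoly[of w P "d - 1"] lead d(1)
    by (simp add: c_def d_def D_diff D_add D_mult algebra_simps)
  then have "c \<in> N" using const_mem_k N(2) by blast
  moreover have "coeff P (d - 1) \<in> N" "lead_coeff P \<in> N" using P(1) by (simp_all add: poly_over_def d_def)
  ultimately have "(c + t - coeff P (d - 1)) / (of_nat d * lead_coeff P) \<in> N"
    using below_top(2)
    by (intro subfield_divide[OF N(1)] subring_diff[OF R] subring_add[OF R] subring_mult[OF R]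
        subring_of_nat[OF R])
  moreover have "of_nat d * lead_coeff P \<noteq> 0" using d(2) P(2) by (auto simp: d_def)
  then have "w = (c + t - coeff P (d - 1)) / (of_nat d * lead_coeff P)" by (simp add: c_def)
  ultimately show ?thesis by simp
qed

lemma algebraic_primitive_mem:
  assumes E: "is_subfield E" "\<forall>z\<in>E. D z \<in> E" "k \<subseteq> E" and h: "D h \<in> E" "algebraic_over E h"
  shows "h \<in> E"
proof -
  have R: "is_subring E" using E(1) subfield_is_subring by blast
  obtain P where P: "poly_over E P" "poly P h = 0" "lead_coeff P = 1"
    and min: "\<And>Q. poly_over E Q \<Longrightarrow> Q \<noteq> 0 \<Longrightarrow> poly Q h = 0 \<Longrightarrow> degree P \<le> degree Q"
    using algebraic_over_monic_min_poly[OF E(1) h(2)] by blast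
  have "degree P \<noteq> 0"
  proof
    assume "degree P = 0"
    then have "P = [:1:]" using P(3) degree_0_id[of P] by simp
    then show False using P(2) by simp
  qed
  have "poly_over E (Dpoly h P)" "poly (Dpoly h P) h = 0"
    using poly_over_Dpoly[OF R E(2) h(1) P(1)] P(2) D_poly[of P h] by auto
  moreover have "coeff (Dpoly h P) (degree P) = 0" using coeff_Dpoly_degree[of h P] P(3) by simp
  ultimately have "Dpoly h P = 0"
    using min[of "Dpoly h P"] degree_Dpoly_le[of h P] by (metis le_antisym leading_coeff_0_iff)
  then show "h \<in> E"
    using mem_if_Dpoly_top_coeffs[OF E(1,3) P(1) \<open>degree P \<noteq> 0\<close>, of h 0] R by simp
qed

lemma degree_one_if_Dpoly_linear:
  assumes N: "is_subfield N" "k \<subseteq> N" and P: "poly_over N P" and w: "w \<notin> N"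
    and DP: "Dpoly w P = [:e, a:]" "a \<noteq> 0" and prim: "b \<in> N" "D b = a"
  shows "degree P = 1"
proof -
  have "degree P \<noteq> 0"
  proof
    assume "degree P = 0"
    then have "coeff P 1 = 0" "coeff P 2 = 0" by (simp_all add: coeff_eq_0)
    then show False using coeff_Dpoly[of w P 1] DP by (simp add: numeral_2_eq_2)
  qed
  moreover have "\<not> 2 \<le> degree P"
  proof
    assume d2: "2 \<le> degree P"
    let ?t = "if degree P = 2 then b else 0"
    have "coeff (Dpoly w P) (degree P) = 0" using DP(1) d2 by (simp add: coeff_eq_0)
    moreover have "coeff (Dpoly w P) (degree P - 1) = D ?t"
      using DP(1) d2 prim(2) by (auto simp: coeff_pCons split: nat.split)
    moreover have "?t \<in> N" using prim(1) subfield_is_subring[OF N(1)] by simp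
    ultimately have "w \<in> N" using mem_if_Dpoly_top_coeffs[OF N P] d2 by simp
    then show False using w by simp
  qed
  ultimately show ?thesis by simp
qed

end

section \<open>Towers of primitives\<close>

context same_constants
begin

primrec tower_ring :: "(nat \<Rightarrow> 'a) \<Rightarrow> nat \<Rightarrow> 'a set" where
  "tower_ring u 0 = k"
| "tower_ring u (Suc m) = ring_adjoin (tower_ring u m) (u m)"

definition tower_field :: "(nat \<Rightarrow> 'a) \<Rightarrow> nat \<Rightarrow> 'a set" where
  "tower_field u m = field_gen (k \<union> u ` {..<m})"

definition primitive_tower :: "(nat \<Rightarrow> 'a) \<Rightarrow> nat \<Rightarrow> bool" where
  "primitive_tower u r \<longleftrightarrow>
     (\<forall>j<r. D (u j) \<in> tower_ring u j \<and> \<not> algebraic_over (tower_field u j) (u j))"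

lemma primitive_tower_mono: "primitive_tower u r \<Longrightarrow> j \<le> r \<Longrightarrow> primitive_tower u j"
  unfolding primitive_tower_def by auto

lemma tower_ring_subring: "is_subring (tower_ring u m)"
  by (induction m) (simp_all add: k_subring ring_adjoin_subring)

lemma tower_ring_mono: "j \<le> m \<Longrightarrow> tower_ring u j \<subseteq> tower_ring u m"
proof (induction m)
  case (Suc m)
  then show ?case
    using ring_adjoin_superset[OF tower_ring_subring, of u m "u m"] by (auto simp: le_Suc_eq)
qed simp

lemma k_subset_tower_ring: "k \<subseteq> tower_ring u m"
  using tower_ring_mono[where j = 0 and m = m and u = u] by simp

lemma tower_ring_mem: "j < m \<Longrightarrow> u j \<in> tower_ring u m"
  using ring_adjoin_mem[OF tower_ring_subring[of u j], of "u j"]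
    tower_ring_mono[where j = "Suc j" and m = m and u = u] by auto

lemma tower_field_subfield: "is_subfield (tower_field u m)"
  by (simp add: tower_field_def field_gen_subfield)

lemma tower_field_subring: "is_subring (tower_field u m)"
  by (simp add: tower_field_def field_gen_subring)

lemma tower_field_mono: "j \<le> m \<Longrightarrow> tower_field u j \<subseteq> tower_field u m"
  unfolding tower_field_def by (rule field_gen_mono) auto

lemma tower_field_Suc: "tower_field u (Suc m) = field_gen (tower_field u m \<union> {u m})"
  unfolding tower_field_def by (rule field_gen_Un_image_lessThan_Suc)

lemma tower_ring_subset_field: "tower_ring u m \<subseteq> tower_field u m"
proof (induction m)
  case 0 then show ?case by (simp add: tower_field_def field_gen_superset)
next
  case (Suc m)
  have "tower_field u m \<union> {u m} \<subseteq> tower_field u (Suc m)"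
    unfolding tower_field_Suc by (rule field_gen_superset)
  then show ?case
    unfolding tower_ring.simps by (intro ring_adjoin_least[OF tower_field_subring]) (use Suc in auto)
qed

lemma k_subset_tower_field: "k \<subseteq> tower_field u m"
  using k_subset_tower_ring tower_ring_subset_field by blast

lemma tower_field_eq_fractions: "tower_field u m = fractions (tower_ring u m)"
  unfolding tower_field_def
proof (rule field_gen_eq_fractions[OF tower_ring_subring])
  show "k \<union> u ` {..<m} \<subseteq> tower_ring u m" using k_subset_tower_ring tower_ring_mem by blast
  show "tower_ring u m \<subseteq> field_gen (k \<union> u ` {..<m})"
    using tower_ring_subset_field unfolding tower_field_def .
qed

lemma tower_ring_D_closed: "primitive_tower u m \<Longrightarrow> z \<in> tower_ring u m \<Longrightarrow> D z \<in> tower_ring u m"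
proof (induction m arbitrary: z)
  case 0 then show ?case using D_mem_k by simp
next
  case (Suc m)
  have tower: "primitive_tower u m" using Suc.prems(1) primitive_tower_mono by simp
  obtain P where P: "z = poly P (u m)" "poly_over (tower_ring u m) P"
    using Suc.prems(2) by (auto simp: ring_adjoin_def)
  have "D (u m) \<in> tower_ring u m" using Suc.prems(1) by (simp add: primitive_tower_def)
  then have "poly_over (tower_ring u m) (Dpoly (u m) P)"
    using poly_over_Dpoly[OF tower_ring_subring] Suc.IH[OF tower] P(2) by blast
  then show ?case using P(1) D_poly by (auto simp: ring_adjoin_def)
qed

lemma tower_field_D_closed:
  assumes "primitive_tower u m" "z \<in> tower_field u m" shows "D z \<in> tower_field u m"
proof -
  have "\<forall>s\<in>k \<union> u ` {..<m}. D s \<in> tower_field u m"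
    using k_subset_tower_ring tower_ring_mem tower_ring_D_closed[OF assms(1)] tower_ring_subset_field
    by blast
  then show ?thesis using field_gen_D_closed assms(2) unfolding tower_field_def by blast
qed

lemma tower_ring_cong: "(\<And>j. j < m \<Longrightarrow> u j = v j) \<Longrightarrow> tower_ring u m = tower_ring v m"
  by (induction m) simp_all

lemma tower_field_cong: "(\<And>j. j < m \<Longrightarrow> u j = v j) \<Longrightarrow> tower_field u m = tower_field v m"
  unfolding tower_field_def by (metis image_cong lessThan_iff)

lemma primitive_tower_extend:
  assumes tower: "primitive_tower u r" and g: "D g \<in> tower_ring u r" "\<not> algebraic_over (tower_field u r) g"
  shows "primitive_tower (u(r := g)) (Suc r)"
    and "tower_field (u(r := g)) (Suc r) = field_gen (tower_field u r \<union> {g})"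
proof -
  have same: "tower_ring (u(r := g)) j = tower_ring u j" "tower_field (u(r := g)) j = tower_field u j"
    if "j \<le> r" for j
    using that by (auto intro!: tower_ring_cong tower_field_cong)
  show "primitive_tower (u(r := g)) (Suc r)"
    using tower g same unfolding primitive_tower_def by (auto simp: less_Suc_eq)
  show "tower_field (u(r := g)) (Suc r) = field_gen (tower_field u r \<union> {g})"
    using same[of r] unfolding tower_field_Suc by simp
qed

end

section \<open>Solutions of linear differential equations in a tower\<close>

context same_constants
begin

definition diff_k_closed :: "'a set \<Rightarrow> bool" where
  "diff_k_closed I \<longleftrightarrow> (\<forall>q\<in>I. D q \<in> I) \<and> (\<forall>c\<in>k. \<forall>q\<in>I. c * q \<in> I)"

lemma leading_coeffs_diff_k_closed:
  assumes tower: "primitive_tower u (Suc m)" and I: "diff_k_closed I"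
  shows "diff_k_closed {coeff P d | P. poly_over (tower_ring u m) P \<and> degree P \<le> d \<and> poly P (u m) \<in> I}"
  unfolding diff_k_closed_def
proof (intro conjI ballI)
  fix c assume "c \<in> {coeff P d | P. poly_over (tower_ring u m) P \<and> degree P \<le> d \<and> poly P (u m) \<in> I}"
  then obtain P where P: "c = coeff P d" "poly_over (tower_ring u m) P" "degree P \<le> d" "poly P (u m) \<in> I"
    by blast
  have "D c = coeff (Dpoly (u m) P) d" using P by (simp add: coeff_Dpoly coeff_eq_0)
  moreover have "poly_over (tower_ring u m) (Dpoly (u m) P)"
    using tower P(2) primitive_tower_mono[OF tower, of m] tower_ring_D_closed
    by (intro poly_over_Dpoly[OF tower_ring_subring]) (auto simp: primitive_tower_def)
  moreover have "degree (Dpoly (u m) P) \<le> d" using degree_Dpoly_le[of "u m" P] P(3) by simp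
  moreover have "D (poly P (u m)) \<in> I" using P(4) I unfolding diff_k_closed_def by blast
  then have "poly (Dpoly (u m) P) (u m) \<in> I" by (simp add: D_poly)
  ultimately show "D c \<in> {coeff P d | P. poly_over (tower_ring u m) P \<and> degree P \<le> d \<and> poly P (u m) \<in> I}"
    by blast
next
  fix a c assume a: "a \<in> k"
    and "c \<in> {coeff P d | P. poly_over (tower_ring u m) P \<and> degree P \<le> d \<and> poly P (u m) \<in> I}"
  then obtain P where P: "c = coeff P d" "poly_over (tower_ring u m) P" "degree P \<le> d" "poly P (u m) \<in> I"
    by blast
  have "a * c = coeff (smult a P) d" "degree (smult a P) \<le> d" "poly (smult a P) (u m) \<in> I"
    using P a I unfolding diff_k_closed_def by auto
  moreover have "poly_over (tower_ring u m) (smult a P)"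
    using a P(2) k_subset_tower_ring by (intro poly_over_smult[OF tower_ring_subring]) auto
  ultimately show "a * c \<in> {coeff P d | P. poly_over (tower_ring u m) P \<and> degree P \<le> d \<and> poly P (u m) \<in> I}"
    by blast
qed

lemma min_degree_normalized_rep_mem_k:
  assumes tower: "primitive_tower u (Suc m)" and I: "diff_k_closed I"
    and P: "poly_over (tower_ring u m) P" "coeff P d = 1" "degree P \<le> d" "poly P (u m) \<in> I"
    and min: "\<And>Q. poly_over (tower_ring u m) Q \<Longrightarrow> poly Q (u m) \<in> I \<Longrightarrow> poly Q (u m) \<noteq> 0 \<Longrightarrow> d \<le> degree Q"
  shows "poly P (u m) \<in> k" "poly P (u m) \<noteq> 0"
proof -
  have tr: "\<not> algebraic_over (tower_field u m) (u m)" using tower by (simp add: primitive_tower_def)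
  have "P \<noteq> 0" using P(2) by auto
  then show "poly P (u m) \<noteq> 0"
    using not_algebraic_overD[OF tr] poly_over_mono[OF tower_ring_subset_field P(1)] by blast
  let ?Q = "Dpoly (u m) P"
  have Q: "poly_over (tower_ring u m) ?Q" "poly ?Q (u m) \<in> I"
    using tower P(1,4) primitive_tower_mono[OF tower, of m] tower_ring_D_closed I D_poly
    by (auto simp: primitive_tower_def diff_k_closed_def intro!: poly_over_Dpoly[OF tower_ring_subring])
  have "coeff ?Q d = 0" using P(2,3) by (simp add: coeff_Dpoly coeff_eq_0)
  then have "degree ?Q \<noteq> d \<or> ?Q = 0" by auto
  then have lt: "degree ?Q < d" if "?Q \<noteq> 0"
    using that degree_Dpoly_le[of "u m" P] P(3) by linarith
  have "poly ?Q (u m) = 0"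
  proof (rule ccontr)
    assume ne: "poly ?Q (u m) \<noteq> 0"
    then have "?Q \<noteq> 0" by auto
    then show False using min[OF Q ne] lt by simp
  qed
  then have "D (poly P (u m)) = 0" by (simp add: D_poly)
  then show "poly P (u m) \<in> k" by (rule const_mem_k)
qed

lemma diff_k_closed_meets_k:
  assumes "primitive_tower u m" "I \<subseteq> tower_ring u m" "diff_k_closed I" "q \<in> I" "q \<noteq> 0"
  shows "\<exists>c\<in>I. c \<in> k \<and> c \<noteq> 0"
  using assms
proof (induction m arbitrary: I q)
  case 0 then show ?case by auto
next
  case (Suc m)
  let ?A = "tower_ring u m" and ?w = "u m"
  let ?S = "{d. \<exists>P. poly_over ?A P \<and> degree P \<le> d \<and> poly P ?w \<in> I \<and> poly P ?w \<noteq> 0}"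
  obtain P0 where "poly_over ?A P0" "q = poly P0 ?w" using Suc.prems(2,4) by (auto simp: ring_adjoin_def)
  then have "degree P0 \<in> ?S" using Suc.prems(4,5) by auto
  define d where "d = (LEAST d. d \<in> ?S)"
  have "d \<in> ?S" unfolding d_def using \<open>degree P0 \<in> ?S\<close> by (rule LeastI)
  have min: "d \<le> degree Q" if "poly_over ?A Q" "poly Q ?w \<in> I" "poly Q ?w \<noteq> 0" for Q
    unfolding d_def using that by (intro Least_le) auto
  define J where "J = {coeff P d | P. poly_over ?A P \<and> degree P \<le> d \<and> poly P ?w \<in> I}"
  have J: "J \<subseteq> ?A" "diff_k_closed J"
    using leading_coeffs_diff_k_closed[OF Suc.prems(1,3)] unfolding J_def poly_over_def by auto
  obtain P where P: "poly_over ?A P" "degree P \<le> d" "poly P ?w \<in> I" "poly P ?w \<noteq> 0"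
    using \<open>d \<in> ?S\<close> by blast
  have "degree P = d" using min[OF P(1,3,4)] P(2) by simp
  moreover have "P \<noteq> 0" using P(4) by auto
  ultimately have "coeff P d \<noteq> 0" by auto
  then obtain c where c: "c \<in> J" "c \<in> k" "c \<noteq> 0"
    using Suc.IH[OF primitive_tower_mono[OF Suc.prems(1)] J] P unfolding J_def by auto
  then obtain P where P: "c = coeff P d" "poly_over ?A P" "degree P \<le> d" "poly P ?w \<in> I"
    unfolding J_def by blast
  let ?P = "smult (inverse c) P"
  have ic: "inverse c \<in> k" using c subfield_inverse[OF k_subfield] by blast
  have "poly_over ?A ?P"
    using ic P(2) k_subset_tower_ring by (intro poly_over_smult[OF tower_ring_subring]) auto
  moreover have "coeff ?P d = 1" "degree ?P \<le> d" using P(1,3) c(3) by simp_all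
  moreover have "poly ?P ?w \<in> I" using Suc.prems(3) ic P(4) unfolding diff_k_closed_def by simp
  ultimately have "poly ?P ?w \<in> k" "poly ?P ?w \<noteq> 0"
    using min_degree_normalized_rep_mem_k[OF Suc.prems(1,3)] min by blast+
  then show ?case using \<open>poly ?P ?w \<in> I\<close> by blast
qed

definition linear_ode_solution :: "'a \<Rightarrow> bool" where
  "linear_ode_solution y \<longleftrightarrow> (\<exists>N a. (\<forall>j<N. a j \<in> k) \<and> (D ^^ N) y + (\<Sum>j<N. a j * (D ^^ j) y) = 0)"

lemma ode_denominators_diff_k_closed:
  assumes tower: "primitive_tower u m" and a: "\<forall>j<N. a j \<in> k"
    and ode: "(D ^^ N) y + (\<Sum>j<N. a j * (D ^^ j) y) = 0"
  shows "diff_k_closed {q \<in> tower_ring u m. \<forall>j<N. q * (D ^^ j) y \<in> tower_ring u m}"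
    (is "diff_k_closed ?I")
proof -
  let ?A = "tower_ring u m"
  have R: "is_subring ?A" by (rule tower_ring_subring)
  have top: "q * (D ^^ N) y \<in> ?A" if "q \<in> ?I" for q
  proof -
    have "(D ^^ N) y = - (\<Sum>j<N. a j * (D ^^ j) y)"
      using ode by (simp add: eq_neg_iff_add_eq_0)
    then have "q * (D ^^ N) y = - (\<Sum>j<N. a j * (q * (D ^^ j) y))"
      by (simp add: sum_distrib_left mult_ac)
    also have "\<dots> \<in> ?A"
    proof -
      have "a j * (q * (D ^^ j) y) \<in> ?A" if "j < N" for j
        using a that \<open>q \<in> ?I\<close> k_subset_tower_ring subring_mult[OF R] by blast
      then show ?thesis by (intro subring_uminus[OF R] subring_sum[OF R]) auto
    qed
    finally show ?thesis .
  qed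
  have "D q \<in> ?I" if q: "q \<in> ?I" for q
  proof -
    have "D q * (D ^^ j) y \<in> ?A" if "j < N" for j
    proof -
      have "D q * (D ^^ j) y = D (q * (D ^^ j) y) - q * (D ^^ Suc j) y" by (simp add: D_mult)
      moreover have "D (q * (D ^^ j) y) \<in> ?A" using tower_ring_D_closed[OF tower] q that by blast
      moreover have "q * (D ^^ Suc j) y \<in> ?A"
      proof (cases "Suc j = N")
        case False
        then have "Suc j < N" using that by simp
        then show ?thesis using q by blast
      qed (use top[OF q] in simp)
      ultimately show ?thesis using subring_diff[OF R] by simp
    qed
    then show ?thesis using q tower_ring_D_closed[OF tower] by blast
  qed
  moreover have "c * q \<in> ?I" if "c \<in> k" "q \<in> ?I" for c q
  proof -
    have "c \<in> ?A" using that(1) k_subset_tower_ring by blast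
    then show ?thesis using that(2) subring_mult[OF R] by (auto simp: mult.assoc)
  qed
  ultimately show ?thesis unfolding diff_k_closed_def by blast
qed

lemma linear_ode_solution_in_tower_ring:
  assumes tower: "primitive_tower u m" and y: "y \<in> tower_field u m" "linear_ode_solution y"
  shows "y \<in> tower_ring u m"
proof -
  let ?A = "tower_ring u m"
  have R: "is_subring ?A" by (rule tower_ring_subring)
  obtain N a where a: "\<forall>j<N. a j \<in> k" and ode: "(D ^^ N) y + (\<Sum>j<N. a j * (D ^^ j) y) = 0"
    using y(2) unfolding linear_ode_solution_def by blast
  show ?thesis
  proof (cases "N = 0")
    case True
    then show ?thesis using ode R by simp
  next
    case False
    let ?I = "{q \<in> ?A. \<forall>j<N. q * (D ^^ j) y \<in> ?A}"
    have "(D ^^ j) y \<in> fractions ?A" for j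
      using y(1) tower_field_D_closed[OF tower] unfolding tower_field_eq_fractions[symmetric]
      by (induction j) auto
    then obtain q where "q \<in> ?I" "q \<noteq> 0"
      using common_denominator[OF R, of N "\<lambda>j. (D ^^ j) y"] by auto
    then obtain c where c: "c \<in> ?I" "c \<in> k" "c \<noteq> 0"
      using diff_k_closed_meets_k[OF tower _ ode_denominators_diff_k_closed[OF tower a ode]] by blast
    then have "c * y \<in> ?A" using False by auto
    then have "inverse c * (c * y) \<in> ?A"
      using c(2) subfield_inverse[OF k_subfield] k_subset_tower_ring subring_mult[OF R] by blast
    then show ?thesis using c(3) by (simp add: mult.assoc[symmetric])
  qed
qed

lemma iterated_integral_D:
  assumes "iterated_integral D k g" shows "iterated_integral D k (D g)"
proof -
  obtain n where "(D ^^ n) g \<in> k" using assms unfolding iterated_integral_def by blast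
  moreover have "(D ^^ n) (D g) = D ((D ^^ n) g)" by (simp add: funpow_swap1)
  ultimately show ?thesis unfolding iterated_integral_def using D_mem_k by metis
qed

lemma linear_ode_solution_if_iterated_integral:
  assumes "iterated_integral D k g" shows "linear_ode_solution g"
proof -
  obtain N where h: "(D ^^ N) g \<in> k" using assms unfolding iterated_integral_def by blast
  show ?thesis
  proof (cases "(D ^^ N) g = 0")
    case True
    then show ?thesis
      unfolding linear_ode_solution_def using k_subring by (intro exI[of _ N] exI[of _ "\<lambda>_. 0"]) simp
  next
    case False
    define a where "a j = (if j = N then - D ((D ^^ N) g) / (D ^^ N) g else 0)" for j
    have "a j \<in> k" for j
      unfolding a_def using h D_mem_k k_subring subfield_divide[OF k_subfield] subring_uminus[OF k_subring]
      by simp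
    moreover have "(D ^^ Suc N) g + (\<Sum>j<Suc N. a j * (D ^^ j) g) = 0"
      using False by (simp add: a_def)
    ultimately show ?thesis unfolding linear_ode_solution_def by blast
  qed
qed

end

section \<open>Unipotence\<close>

locale diff_automorphism = same_constants +
  fixes L :: "'a set" and \<sigma> :: "'a \<Rightarrow> 'a"
  assumes L_subring: "is_subring L" and k_subset_L: "k \<subseteq> L" and aut: "diff_aut D k L \<sigma>"
begin

abbreviation \<delta> :: "'a \<Rightarrow> 'a" where "\<delta> \<equiv> \<lambda>z. \<sigma> z - z"

lemma sigma_mem: "z \<in> L \<Longrightarrow> \<sigma> z \<in> L"
  using aut unfolding diff_aut_def bij_betw_def by blast

lemma sigma_add: "x \<in> L \<Longrightarrow> y \<in> L \<Longrightarrow> \<sigma> (x + y) = \<sigma> x + \<sigma> y"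
  using aut unfolding diff_aut_def by blast

lemma sigma_mult: "x \<in> L \<Longrightarrow> y \<in> L \<Longrightarrow> \<sigma> (x * y) = \<sigma> x * \<sigma> y"
  using aut unfolding diff_aut_def by blast

lemma sigma_D: "z \<in> L \<Longrightarrow> \<sigma> (D z) = D (\<sigma> z)"
  using aut unfolding diff_aut_def by blast

lemma sigma_k: "c \<in> k \<Longrightarrow> \<sigma> c = c"
  using aut unfolding diff_aut_def by blast

lemma sigma_diff:
  assumes "x \<in> L" "y \<in> L" shows "\<sigma> (x - y) = \<sigma> x - \<sigma> y"
proof -
  have "x - y \<in> L" using subring_diff[OF L_subring] assms by blast
  then have "\<sigma> x = \<sigma> (x - y) + \<sigma> y" using sigma_add[of "x - y" y] assms(2) by simp
  then show ?thesis by simp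
qed

lemma delta_pow_mem: "z \<in> L \<Longrightarrow> (\<delta> ^^ j) z \<in> L"
  by (induction j) (simp_all add: subring_diff[OF L_subring] sigma_mem)

lemma delta_pow_0 [simp]: "(\<delta> ^^ j) 0 = 0"
proof -
  have "\<sigma> 0 = 0" using sigma_k[of 0] k_subring by simp
  then show ?thesis by (induction j) simp_all
qed

lemma delta_pow_add: "x \<in> L \<Longrightarrow> y \<in> L \<Longrightarrow> (\<delta> ^^ j) (x + y) = (\<delta> ^^ j) x + (\<delta> ^^ j) y"
  by (induction j) (simp_all add: sigma_add delta_pow_mem)

lemma delta_pow_mult_k: "c \<in> k \<Longrightarrow> z \<in> L \<Longrightarrow> (\<delta> ^^ j) (c * z) = c * (\<delta> ^^ j) z"
  using k_subset_L by (induction j) (auto simp: sigma_mult sigma_k delta_pow_mem algebra_simps)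

lemma delta_pow_D: "z \<in> L \<Longrightarrow> (\<delta> ^^ j) (D z) = D ((\<delta> ^^ j) z)"
  by (induction j) (simp_all add: sigma_D delta_pow_mem D_diff)

lemma delta_pow_sigma: "z \<in> L \<Longrightarrow> (\<delta> ^^ j) (\<sigma> z) = \<sigma> ((\<delta> ^^ j) z)"
  by (induction j) (simp_all add: sigma_diff sigma_mem delta_pow_mem)

lemma delta_pow_eq_0_mono:
  assumes "(\<delta> ^^ p) z = 0" "p \<le> q" shows "(\<delta> ^^ q) z = 0"
proof -
  have "(\<delta> ^^ ((q - p) + p)) z = (\<delta> ^^ (q - p)) ((\<delta> ^^ p) z)"
    by (simp only: funpow_add comp_apply)
  then show ?thesis using assms by simp
qed

text \<open>By the twisted Leibniz rule \<open>\<delta>(a b) = \<delta>(a) \<sigma>(b) + a \<delta>(b)\<close>, and since \<open>\<delta>\<close> commutes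
  with \<open>\<sigma>\<close>, nilpotency orders add up under multiplication.\<close>

lemma delta_pow_mult_eq_0:
  "a \<in> L \<Longrightarrow> b \<in> L \<Longrightarrow> (\<delta> ^^ p) a = 0 \<Longrightarrow> (\<delta> ^^ q) b = 0 \<Longrightarrow> (\<delta> ^^ (p + q)) (a * b) = 0"
proof (induction "p + q" arbitrary: a b p q)
  case 0 then show ?case by simp
next
  case (Suc n)
  show ?case
  proof (cases "p = 0 \<or> q = 0")
    case True
    then show ?thesis using Suc.prems(3,4) by auto
  next
    case False
    then obtain p' q' where p': "p = Suc p'" and q': "q = Suc q'" by (metis not0_implies_Suc)
    have L: "\<delta> a \<in> L" "\<sigma> b \<in> L" "\<delta> b \<in> L"
      using Suc.prems(1,2) delta_pow_mem[where j = 1] sigma_mem by auto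
    have "\<delta> (a * b) = \<delta> a * \<sigma> b + a * \<delta> b"
      using sigma_mult[OF Suc.prems(1,2)] by (simp add: algebra_simps)
    then have "(\<delta> ^^ Suc n) (a * b) = (\<delta> ^^ n) (\<delta> a * \<sigma> b) + (\<delta> ^^ n) (a * \<delta> b)"
      using delta_pow_add L Suc.prems(1,2) subring_mult[OF L_subring]
      by (simp add: funpow_Suc_right del: funpow.simps)
    moreover have "(\<delta> ^^ n) (\<delta> a * \<sigma> b) = 0"
    proof -
      have "(\<delta> ^^ p') (\<delta> a) = 0" using Suc.prems(3) p' by (simp add: funpow_Suc_right del: funpow.simps)
      moreover have "(\<delta> ^^ q) (\<sigma> b) = 0"
        using delta_pow_sigma[OF Suc.prems(2)] Suc.prems(4) sigma_k k_subring by simp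
      moreover have "n = p' + q" using Suc.hyps(2) p' by simp
      ultimately show ?thesis using Suc.hyps(1)[of p' q "\<delta> a" "\<sigma> b"] L(1,2) by simp
    qed
    moreover have "(\<delta> ^^ n) (a * \<delta> b) = 0"
    proof -
      have "(\<delta> ^^ q') (\<delta> b) = 0" using Suc.prems(4) q' by (simp add: funpow_Suc_right del: funpow.simps)
      moreover have "n = p + q'" using Suc.hyps(2) q' by simp
      ultimately show ?thesis using Suc.hyps(1)[of p q' a "\<delta> b"] L(3) Suc.prems(1,3) by simp
    qed
    ultimately show ?thesis using Suc.hyps(2) by simp
  qed
qed

lemma delta_pow_sum:
  "(\<And>i. i \<in> S \<Longrightarrow> f i \<in> L) \<Longrightarrow> (\<delta> ^^ j) (\<Sum>i\<in>S. f i) = (\<Sum>i\<in>S. (\<delta> ^^ j) (f i))"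
  by (induction S rule: infinite_finite_induct) (simp_all add: delta_pow_add subring_sum[OF L_subring])

definition unipotent_elems :: "'a set" where
  "unipotent_elems = {z \<in> L. \<exists>p. (\<delta> ^^ p) z = 0}"

lemma unipotent_elems_add:
  assumes "x \<in> unipotent_elems" "y \<in> unipotent_elems" shows "x + y \<in> unipotent_elems"
proof -
  obtain p q where "x \<in> L" "y \<in> L" "(\<delta> ^^ p) x = 0" "(\<delta> ^^ q) y = 0"
    using assms unfolding unipotent_elems_def by blast
  then have "x + y \<in> L" "(\<delta> ^^ (p + q)) (x + y) = 0"
    using delta_pow_eq_0_mono[of p x "p + q"] delta_pow_eq_0_mono[of q y "p + q"]
    by (simp_all add: delta_pow_add subring_add[OF L_subring])
  then show ?thesis unfolding unipotent_elems_def by blast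
qed

lemma unipotent_elems_mult: "x \<in> unipotent_elems \<Longrightarrow> y \<in> unipotent_elems \<Longrightarrow> x * y \<in> unipotent_elems"
  unfolding unipotent_elems_def using delta_pow_mult_eq_0 subring_mult[OF L_subring] by blast

lemma k_subset_unipotent_elems: "k \<subseteq> unipotent_elems"
  unfolding unipotent_elems_def using k_subset_L by (auto intro!: exI[of _ 1] simp: sigma_k)

lemma unipotent_elems_poly:
  "poly_over unipotent_elems P \<Longrightarrow> w \<in> unipotent_elems \<Longrightarrow> poly P w \<in> unipotent_elems"
proof (induction P)
  case (pCons a P)
  have "a \<in> unipotent_elems" "poly_over unipotent_elems P"
    using pCons.prems(1) unfolding poly_over_def by (metis coeff_pCons_0, metis coeff_pCons_Suc)
  then show ?case using pCons unipotent_elems_add unipotent_elems_mult by simp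
qed (use k_subset_unipotent_elems k_subring in auto)

lemma unipotent_elems_primitive:
  assumes "w \<in> L" "D w \<in> unipotent_elems" shows "w \<in> unipotent_elems"
proof -
  obtain p where "(\<delta> ^^ p) (D w) = 0" using assms(2) unfolding unipotent_elems_def by blast
  then have "(\<delta> ^^ p) w \<in> k" using delta_pow_D[OF assms(1)] const_mem_k by simp
  then have "(\<delta> ^^ Suc p) w = 0" by (simp add: sigma_k)
  then show ?thesis unfolding unipotent_elems_def using assms(1) by blast
qed

lemma tower_ring_subset_unipotent_elems:
  assumes "primitive_tower u r" "tower_field u r = L" "m \<le> r"
  shows "tower_ring u m \<subseteq> unipotent_elems"
  using assms(3)
proof (induction m)
  case 0 then show ?case using k_subset_unipotent_elems by simp
next
  case (Suc m)
  have "D (u m) \<in> tower_ring u m" using assms(1) Suc.prems by (simp add: primitive_tower_def)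
  moreover have "u m \<in> L"
    using tower_ring_mem[of m "Suc m" u] tower_ring_mono[OF Suc.prems, of u] tower_ring_subset_field assms(2)
    by blast
  ultimately have "u m \<in> unipotent_elems" using Suc unipotent_elems_primitive by auto
  moreover have "poly_over unipotent_elems P" if "poly_over (tower_ring u m) P" for P
    using that Suc poly_over_mono by auto
  ultimately show ?case using unipotent_elems_poly by (auto simp: ring_adjoin_def)
qed

end

context same_constants
begin

lemma unipotent_galois_tower_field:
  assumes tower: "primitive_tower u r"
  shows "unipotent_galois D k (tower_field u r)"
  unfolding unipotent_galois_def
proof (intro allI impI)
  fix n a y \<sigma> assume H: "pv_data D k (tower_field u r) n a y \<and> diff_aut D k (tower_field u r) \<sigma>"
  interpret diff_automorphism D k "tower_field u r" \<sigma>
    using H tower_field_subring k_subset_tower_field by unfold_locales auto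
  have "y i \<in> unipotent_elems" if "i < n" for i
  proof -
    have "y i \<in> tower_field u r" "linear_ode_solution (y i)"
      using H that unfolding pv_data_def linear_ode_solution_def by blast+
    then show ?thesis
      using linear_ode_solution_in_tower_ring[OF tower] tower_ring_subset_unipotent_elems[OF tower refl]
      by blast
  qed
  then have "\<forall>i. \<exists>q. i < n \<longrightarrow> (\<delta> ^^ q) (y i) = 0" unfolding unipotent_elems_def by blast
  from choice[OF this] obtain p where p: "\<forall>i. i < n \<longrightarrow> (\<delta> ^^ p i) (y i) = 0" by blast
  have yL: "y i \<in> tower_field u r" if "i < n" for i using H that unfolding pv_data_def by blast
  show "\<exists>m. \<forall>c. (\<forall>i<n. D (c i) = 0) \<longrightarrow> (\<delta> ^^ m) (\<Sum>i<n. c i * y i) = 0"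
  proof (intro exI allI impI)
    fix c assume c: "\<forall>i<n. D (c i) = 0"
    let ?m = "\<Sum>i<n. p i"
    have ck: "c i \<in> k" if "i < n" for i using c that const_mem_k by blast
    have cyL: "c i * y i \<in> tower_field u r" if "i < n" for i
      using ck[OF that] yL[OF that] k_subset_tower_field subring_mult[OF tower_field_subring] by blast
    have "(\<delta> ^^ ?m) (c i * y i) = 0" if "i < n" for i
    proof -
      have "p i \<le> ?m" using that by (intro member_le_sum) auto
      then have "(\<delta> ^^ ?m) (y i) = 0" using p that delta_pow_eq_0_mono by blast
      then show ?thesis using delta_pow_mult_k[OF ck yL] that by simp
    qed
    moreover have "(\<delta> ^^ ?m) (\<Sum>i<n. c i * y i) = (\<Sum>i<n. (\<delta> ^^ ?m) (c i * y i))"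
      by (rule delta_pow_sum) (use cyL in simp)
    ultimately show "(\<delta> ^^ ?m) (\<Sum>i<n. c i * y i) = 0" by simp
  qed
qed

end

locale same_constants_x = same_constants +
  fixes x :: 'a
  assumes x_mem_k: "x \<in> k" and D_x: "D x = 1"
begin

abbreviation Cx :: "'a set" where "Cx \<equiv> ring_adjoin C x"

lemma x_not_algebraic_over_C: "\<not> algebraic_over C x"
proof
  assume "algebraic_over C x"
  then obtain P where P: "P \<noteq> 0" "poly_over C P" "poly P x = 0"
    unfolding algebraic_over_def poly_over_def by blast
  then show False
  proof (induction "degree P" arbitrary: P rule: less_induct)
    case less
    have "poly (pderiv P) x = 0" "poly_over C (pderiv P)"
      using D_poly[of P x] Dpoly_over_C[OF less.prems(2) D_x] less.prems(2,3)
      by (simp_all add: poly_over_pderiv[OF C_subring])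
    moreover have "degree P \<noteq> 0"
    proof
      assume "degree P = 0"
      then obtain c where "P = [:c:]" by (rule degree_eq_zeroE)
      then show False using less.prems(1,3) by simp
    qed
    ultimately show False
      using less.hyps[of "pderiv P"] by (simp add: degree_pderiv pderiv_eq_0_iff)
  qed
qed

lemma funpow_D_x_power: "i < j \<Longrightarrow> (D ^^ j) (x ^ i) = 0"
proof (induction i arbitrary: j)
  case 0
  then show ?case by (cases j) (simp_all add: funpow_swap1)
next
  case (Suc i)
  then obtain j' where j: "j = Suc j'" "i < j'" by (cases j) auto
  have "(D ^^ j) (x ^ Suc i) = (D ^^ j') (of_nat (Suc i) * x ^ i)"
    using D_power_Suc[of x i] D_x j(1) by (simp add: funpow_swap1)
  also have "\<dots> = of_nat (Suc i) * (D ^^ j') (x ^ i)"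
    by (rule funpow_D_mult_const) (simp del: of_nat_Suc)
  finally show ?case using Suc.IH[OF j(2)] by simp
qed

lemma x_powers_f_independent:
  assumes f: "f \<notin> k" and c: "\<forall>i\<le>n. D (c i) = 0" and rel: "(\<Sum>i<n. c i * x ^ i) + c n * f = 0"
  shows "\<forall>i\<le>n. c i = 0"
proof -
  have ck: "c i \<in> k" if "i \<le> n" for i using c that const_mem_k by blast
  have sum_k: "(\<Sum>i<n. c i * x ^ i) \<in> k"
    using ck x_mem_k by (intro subring_sum[OF k_subring] subring_mult[OF k_subring] subring_power[OF k_subring]) auto
  have "c n = 0"
  proof (rule ccontr)
    assume "c n \<noteq> 0"
    then have "f = - (\<Sum>i<n. c i * x ^ i) / c n" using rel by (simp add: field_simps eq_neg_iff_add_eq_0 add.commute)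
    moreover have "- (\<Sum>i<n. c i * x ^ i) / c n \<in> k"
      using sum_k ck[of n] by (intro subfield_divide[OF k_subfield] subring_uminus[OF k_subring]) auto
    ultimately show False using f by simp
  qed
  moreover have "\<forall>i\<in>{..<n}. c i = 0"
    using \<open>c n = 0\<close> rel c
    by (intro not_algebraic_over_sum_powers[OF x_not_algebraic_over_C C_subring]) auto
  ultimately show ?thesis by (auto simp: le_less)
qed

lemma Cx_subset_k: "Cx \<subseteq> k"
  using ring_adjoin_least[OF k_subring C_subset_k x_mem_k] .

lemma one_mem_Cx: "1 \<in> Cx"
  using subring_1[OF ring_adjoin_subring[OF C_subring]] .

lemma antiderivative_in_Cx:
  assumes "a \<in> Cx" shows "\<exists>b\<in>Cx. D b = a"
proof -
  obtain P where P: "a = poly P x" "poly_over C P" using assms unfolding ring_adjoin_def by blast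
  define Q where "Q = (\<Sum>i\<le>degree P. monom (coeff P i / of_nat (Suc i)) (Suc i))"
  have Q: "poly_over C Q"
    unfolding Q_def using P(2)
    by (intro poly_over_sum[OF C_subring] poly_over_monom[OF C_subring])
      (simp add: poly_over_def D_const_divide del: of_nat_Suc)
  have "pderiv Q = (\<Sum>i\<le>degree P. monom (coeff P i) i)"
    unfolding Q_def higher_pderiv_sum[of 1, simplified]
    by (intro sum.cong) (auto simp: pderiv_monom simp del: of_nat_Suc)
  then have "pderiv Q = P" by (simp add: poly_as_sum_of_monoms)
  then have "D (poly Q x) = a" using D_poly[of Q x] Dpoly_over_C[OF Q D_x] P(1) by simp
  then show ?thesis using Q unfolding ring_adjoin_def by blast
qed

lemma mem_Cx_if_D_mem:
  assumes "D c \<in> Cx" shows "c \<in> Cx"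
proof -
  obtain b where b: "b \<in> Cx" "D b = D c" using antiderivative_in_Cx[OF assms] by blast
  have "c - b \<in> C" using b(2) by (simp add: D_diff)
  then have "c - b \<in> Cx" using ring_adjoin_superset[OF C_subring] by blast
  then show ?thesis
    using b(1) subring_add[OF ring_adjoin_subring[OF C_subring]] by (metis diff_add_cancel)
qed

end

context same_constants_x
begin

text \<open>The coefficient of the last generator is kept in \<open>C[x]\<close> because this ring is closed under
  integration up to constants (\<open>antiderivative_in_Cx\<close>, \<open>mem_Cx_if_D_mem\<close>), which makes the
  property stable under adjoining the next primitive.\<close>

definition affine_top_tower :: "'a set \<Rightarrow> 'a \<Rightarrow> bool" where
  "affine_top_tower F g \<longleftrightarrow> (\<exists>r u a e. 0 < r \<and> primitive_tower u r \<and> tower_field u r = F \<and>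
     g = a * u (r - 1) + e \<and> a \<in> Cx \<and> a \<noteq> 0 \<and> e \<in> tower_field u (r - 1))"

lemma affine_top_tower_extend:
  assumes tower: "primitive_tower u r" and g: "D g \<in> tower_ring u r" "g \<notin> tower_field u r"
  shows "affine_top_tower (field_gen (tower_field u r \<union> {g})) g"
proof -
  have "\<not> algebraic_over (tower_field u r) g"
    using algebraic_primitive_mem[OF tower_field_subfield _ k_subset_tower_field]
      tower_field_D_closed[OF tower] g tower_ring_subset_field by blast
  then have "primitive_tower (u(r := g)) (Suc r)"
    "tower_field (u(r := g)) (Suc r) = field_gen (tower_field u r \<union> {g})"
    using primitive_tower_extend[OF tower g(1)] by blast+
  moreover have "0 \<in> tower_field (u(r := g)) r" using tower_field_subring by simp
  ultimately show ?thesis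
    unfolding affine_top_tower_def using one_mem_Cx
    by (intro exI[of _ "Suc r"] exI[of _ "u(r := g)"] exI[of _ 1] exI[of _ 0]) auto
qed

lemma affine_in_top_of_tower:
  assumes tower: "primitive_tower u (Suc r)" and g: "g \<in> tower_ring u (Suc r)"
    and Dg: "D g = a * u r + e" "a \<in> Cx" "a \<noteq> 0" "e \<in> tower_field u r"
  shows "\<exists>a' e'. g = a' * u r + e' \<and> a' \<in> Cx \<and> a' \<noteq> 0 \<and> e' \<in> tower_field u r"
proof -
  let ?w = "u r" and ?A = "tower_ring u r" and ?N = "tower_field u r"
  obtain P where P: "g = poly P ?w" "poly_over ?A P" using g by (auto simp: ring_adjoin_def)
  have tr: "\<not> algebraic_over ?N ?w" and Dw: "D ?w \<in> ?A" using tower by (simp_all add: primitive_tower_def)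
  have PN: "poly_over ?N P" using poly_over_mono[OF tower_ring_subset_field P(2)] .
  have aN: "a \<in> ?N" using Dg(2) Cx_subset_k k_subset_tower_field by blast
  have "poly_over ?A (Dpoly ?w P)"
    using poly_over_Dpoly[OF tower_ring_subring _ Dw P(2)]
      tower_ring_D_closed[OF primitive_tower_mono[OF tower, of r]] by auto
  then have "poly_over ?N (Dpoly ?w P - [:e, a:])"
    using aN Dg(4) poly_over_mono[OF tower_ring_subset_field]
    by (simp add: poly_over_diff[OF tower_field_subring] tower_field_subring)
  moreover have "poly (Dpoly ?w P - [:e, a:]) ?w = 0"
    using D_poly[of P ?w] P(1) Dg(1) by (simp add: algebra_simps)
  ultimately have "Dpoly ?w P - [:e, a:] = 0" using not_algebraic_overD[OF tr] by blast
  then have DP: "Dpoly ?w P = [:e, a:]" by simp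
  obtain b where b: "b \<in> Cx" "D b = a" using antiderivative_in_Cx[OF Dg(2)] by blast
  have "?w \<notin> ?N" using tr algebraic_over_mem[OF tower_field_subring] by blast
  then have deg: "degree P = 1"
    using degree_one_if_Dpoly_linear[OF tower_field_subfield k_subset_tower_field PN _ DP Dg(3)]
      b Cx_subset_k k_subset_tower_field by blast
  have "D (coeff P 1) = a"
    using coeff_Dpoly[of ?w P 1] DP deg by (simp add: coeff_eq_0)
  then have "coeff P 1 \<in> Cx" "coeff P 1 \<noteq> 0"
    using mem_Cx_if_D_mem Dg(2,3) by auto
  moreover have "g = coeff P 1 * ?w + coeff P 0"
    using P(1) deg by (simp add: poly_altdef)
  moreover have "coeff P 0 \<in> ?N" using PN by (simp add: poly_over_def)
  ultimately show ?thesis by blast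
qed

lemma affine_top_tower_step:
  assumes top: "affine_top_tower F (D g)" and g: "iterated_integral D k g"
  shows "affine_top_tower (field_gen (F \<union> {g})) g"
proof -
  obtain r u a e where r: "0 < r" "primitive_tower u r" "tower_field u r = F"
    and Dg: "D g = a * u (r - 1) + e" "a \<in> Cx" "a \<noteq> 0" "e \<in> tower_field u (r - 1)"
    using top unfolding affine_top_tower_def by blast
  have "u (r - 1) \<in> tower_field u r"
    using tower_ring_mem[of "r - 1" r u] r(1) tower_ring_subset_field by auto
  moreover have "a \<in> tower_field u r" "e \<in> tower_field u r"
    using Dg(2,4) Cx_subset_k k_subset_tower_field tower_field_mono[of "r - 1" r u] by auto
  ultimately have "D g \<in> tower_field u r"
    using Dg(1) by (simp add: subring_add[OF tower_field_subring] subring_mult[OF tower_field_subring])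
  then have DgA: "D g \<in> tower_ring u r"
    using linear_ode_solution_in_tower_ring[OF r(2)]
      linear_ode_solution_if_iterated_integral[OF iterated_integral_D[OF g]] by blast
  show ?thesis
  proof (cases "g \<in> F")
    case False
    then show ?thesis using affine_top_tower_extend[OF r(2) DgA] r(3) by simp
  next
    case True
    then have "g \<in> tower_ring u r"
      using linear_ode_solution_in_tower_ring[OF r(2)] linear_ode_solution_if_iterated_integral[OF g] r(3)
      by blast
    then obtain a' e' where "g = a' * u (r - 1) + e'" "a' \<in> Cx" "a' \<noteq> 0"
      "e' \<in> tower_field u (r - 1)"
      using affine_in_top_of_tower[of u "r - 1" g a e] r Dg by auto
    moreover have "field_gen (F \<union> {g}) = F"
      using True field_gen_insert_mem[of g F] field_gen_idem[OF tower_field_subfield] r(3)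
        field_gen_superset[of F] by auto
    ultimately show ?thesis unfolding affine_top_tower_def using r by blast
  qed
qed

lemma transcendence_tower_of_affine_top_tower:
  assumes "affine_top_tower F g"
  shows "\<exists>(r::nat) y. 1 \<le> r \<and> y (r - 1) = g \<and>
    (\<forall>i<r. \<not> algebraic_over (field_gen (k \<union> y ` {..<i})) (y i)) \<and> F = field_gen (k \<union> y ` {..<r})"
proof -
  obtain r u a e where r: "0 < r" "primitive_tower u r" "tower_field u r = F"
    and g: "g = a * u (r - 1) + e" "a \<in> Cx" "a \<noteq> 0" "e \<in> tower_field u (r - 1)"
    using assms unfolding affine_top_tower_def by blast
  define r0 where "r0 = r - 1"
  have r0: "r = Suc r0" using r(1) by (simp add: r0_def)
  define y where "y = u(r0 := g)"
  have low: "field_gen (k \<union> y ` {..<i}) = tower_field u i" if "i \<le> r0" for i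
  proof -
    have "y ` {..<i} = u ` {..<i}" using that by (intro image_cong) (auto simp: y_def)
    then show ?thesis by (simp add: tower_field_def)
  qed
  have aN: "a \<in> tower_field u r0" using g(2) Cx_subset_k k_subset_tower_field by blast
  have eN: "e \<in> tower_field u r0" using g(4) by (simp add: r0_def)
  have "F = field_gen (tower_field u r0 \<union> {u r0})" using r(3) r0 tower_field_Suc by simp
  also have "\<dots> = field_gen (tower_field u r0 \<union> {g})"
    using field_gen_insert_affine[OF tower_field_subfield aN g(3) eN] g(1) by (simp add: r0_def)
  also have "\<dots> = field_gen (field_gen (k \<union> y ` {..<r0}) \<union> {y r0})"
    using low[of r0] by (simp add: y_def)
  also have "\<dots> = field_gen (k \<union> y ` {..<r})" using r0 by (simp only: field_gen_Un_image_lessThan_Suc)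
  finally have "F = field_gen (k \<union> y ` {..<r})" .
  moreover have "\<not> algebraic_over (field_gen (k \<union> y ` {..<i})) (y i)" if "i < r" for i
  proof (cases "i = r0")
    case True
    have "\<not> algebraic_over (tower_field u r0) (u r0)" using r(2) r0 by (simp add: primitive_tower_def)
    then have "\<not> algebraic_over (tower_field u r0) g"
      using not_algebraic_over_affine[OF _ tower_field_subring aN g(3) eN] g(1) by (simp add: r0_def)
    then show ?thesis using True low[of r0] by (simp add: y_def)
  next
    case False
    then have "i < r0" using that r0 by simp
    then show ?thesis using r(2) r0 low[of i] by (simp add: primitive_tower_def y_def)
  qed
  moreover have "y (r - 1) = g" by (simp add: y_def r0_def)
  moreover have "1 \<le> r" using r(1) by simp
  ultimately show ?thesis by blast
qed

end

section \<open>Iterated integrals\<close>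

context same_constants
begin

definition iint_order :: "'a \<Rightarrow> nat" where
  "iint_order f = (LEAST n. (D ^^ n) f \<in> k)"

lemma funpow_D_iint_order_mem:
  "iterated_integral D k f \<Longrightarrow> (D ^^ iint_order f) f \<in> k"
  unfolding iterated_integral_def iint_order_def by (rule LeastI_ex)

lemma funpow_D_not_mem_below_iint_order: "j < iint_order f \<Longrightarrow> (D ^^ j) f \<notin> k"
  unfolding iint_order_def by (rule not_less_Least)

lemma iint_order_pos: "iterated_integral D k f \<Longrightarrow> f \<notin> k \<Longrightarrow> 0 < iint_order f"
  using funpow_D_iint_order_mem by (metis funpow_0 gr0I)

lemma funpow_D_iint_order_neq_0:
  assumes "iterated_integral D k f" "f \<notin> k" shows "(D ^^ iint_order f) f \<noteq> 0"
proof
  let ?m = "iint_order f - 1"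
  assume "(D ^^ iint_order f) f = 0"
  moreover have "Suc ?m = iint_order f" using iint_order_pos[OF assms] by simp
  ultimately have "(D ^^ Suc ?m) f = 0" by simp
  then have "(D ^^ ?m) f \<in> k" using const_mem_k by simp
  then show False using funpow_D_not_mem_below_iint_order[of ?m f] iint_order_pos[OF assms] by simp
qed

lemma funpow_D_mem_diff_adjoin: "(D ^^ j) f \<in> diff_adjoin D k f"
proof (induction j)
  case 0 then show ?case using diff_field_gen_superset[of "k \<union> {f}" D] unfolding diff_adjoin_def by auto
next
  case (Suc j)
  then show ?case
    using diff_field_gen_diff_subfield unfolding diff_adjoin_def is_diff_subfield_def by auto
qed

lemma D_mem_iint_generators:
  assumes f: "iterated_integral D k f" and s: "s \<in> k \<union> (\<lambda>j. (D ^^ j) f) ` {..<iint_order f}"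
  shows "D s \<in> k \<union> (\<lambda>j. (D ^^ j) f) ` {..<iint_order f}"
proof (cases "s \<in> k")
  case False
  then obtain j where j: "j < iint_order f" "s = (D ^^ j) f" using s by auto
  show ?thesis
  proof (cases "Suc j = iint_order f")
    case True
    then show ?thesis using j funpow_D_iint_order_mem[OF f] by (metis UnI1 funpow.simps(2) o_apply)
  next
    case False
    then have "Suc j < iint_order f" using j(1) by simp
    then show ?thesis using j(2) by (intro UnI2 image_eqI[of _ _ "Suc j"]) auto
  qed
qed (simp add: D_mem_k)

lemma diff_adjoin_eq_field_gen:
  assumes f: "iterated_integral D k f"
  shows "diff_adjoin D k f = field_gen (k \<union> (\<lambda>j. (D ^^ j) f) ` {..<iint_order f})"
proof -
  let ?S = "k \<union> (\<lambda>j. (D ^^ j) f) ` {..<iint_order f}"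
  have "\<forall>s\<in>?S. D s \<in> ?S" using D_mem_iint_generators[OF f] by blast
  then have "diff_field_gen D ?S = field_gen ?S"
    using field_gen_superset[of ?S] by (intro diff_field_gen_eq_field_gen) blast
  moreover have "diff_field_gen D ?S = diff_adjoin D k f"
  proof (rule subset_antisym)
    show "diff_field_gen D ?S \<subseteq> diff_adjoin D k f"
    proof (rule diff_field_gen_least)
      show "is_diff_subfield D (diff_adjoin D k f)"
        unfolding diff_adjoin_def by (rule diff_field_gen_diff_subfield)
      show "?S \<subseteq> diff_adjoin D k f"
        using funpow_D_mem_diff_adjoin diff_field_gen_superset[of "k \<union> {f}" D]
        unfolding diff_adjoin_def by auto
    qed
    have "f \<in> ?S" using iint_order_pos[OF f] by (cases "f \<in> k") (auto intro: image_eqI[of _ _ 0])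
    then have "k \<union> {f} \<subseteq> diff_field_gen D ?S" using diff_field_gen_superset[of ?S D] by blast
    then show "diff_adjoin D k f \<subseteq> diff_field_gen D ?S"
      unfolding diff_adjoin_def by (intro diff_field_gen_least[OF diff_field_gen_diff_subfield])
  qed
  ultimately show ?thesis by simp
qed

lemma diff_adjoin_mem: "f \<in> k \<Longrightarrow> diff_adjoin D k f = k"
  unfolding diff_adjoin_def using diff_field_gen_idem[OF k_diff_subfield] by (simp add: insert_absorb)

end

context same_constants_x
begin

lemma affine_top_tower_derivatives:
  assumes f: "iterated_integral D k f" "f \<notin> k" and m: "1 \<le> m" "m \<le> iint_order f"
  shows "affine_top_tower (field_gen (k \<union> (\<lambda>j. (D ^^ j) f) ` {iint_order f - m..<iint_order f}))
    ((D ^^ (iint_order f - m)) f)"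
  using m
proof (induction m rule: dec_induct)
  case base
  let ?g = "(D ^^ (iint_order f - 1)) f" and ?u = "\<lambda>_::nat. 0"
  have n: "Suc (iint_order f - 1) = iint_order f" using iint_order_pos[OF f] by simp
  have "D ?g \<in> tower_ring ?u 0" using funpow_D_iint_order_mem[OF f(1)] n by (metis funpow.simps(2) o_apply tower_ring.simps(1))
  moreover have "tower_field ?u 0 = k" using field_gen_idem[OF k_subfield] by (simp add: tower_field_def)
  moreover have "?g \<notin> k" using funpow_D_not_mem_below_iint_order n by (metis lessI)
  moreover have "{iint_order f - 1..<iint_order f} = {iint_order f - 1}" using n by auto
  ultimately show ?case
    using affine_top_tower_extend[of ?u 0 ?g] by (simp add: primitive_tower_def field_gen_field_gen_Un)
next
  case (step i)
  let ?n = "iint_order f" and ?F = "\<lambda>j. (D ^^ j) f"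
  let ?g = "?F (?n - Suc i)"
  have i: "Suc i \<le> ?n" using step.hyps(2) m(2) by simp
  have "D ?g = ?F (?n - i)" using i by (metis Suc_diff_Suc Suc_le_lessD funpow.simps(2) o_apply)
  moreover have "(D ^^ Suc i) ?g = (D ^^ (Suc i + (?n - Suc i))) f" by (simp only: funpow_add comp_apply)
  then have "(D ^^ Suc i) ?g = ?F ?n" using i by simp
  then have "iterated_integral D k ?g"
    unfolding iterated_integral_def using funpow_D_iint_order_mem[OF f(1)] by metis
  moreover have "affine_top_tower (field_gen (k \<union> ?F ` {?n - i..<?n})) (?F (?n - i))"
    using step.IH i by simp
  ultimately have "affine_top_tower (field_gen (field_gen (k \<union> ?F ` {?n - i..<?n}) \<union> {?g})) ?g"
    using affine_top_tower_step by simp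
  moreover have "field_gen (field_gen (k \<union> ?F ` {?n - i..<?n}) \<union> {?g}) =
      field_gen (k \<union> ?F ` {?n - Suc i..<?n})"
  proof -
    have "{?n - Suc i..<?n} = insert (?n - Suc i) {?n - i..<?n}" using i by auto
    then have "k \<union> ?F ` {?n - i..<?n} \<union> {?g} = k \<union> ?F ` {?n - Suc i..<?n}" by auto
    then show ?thesis by (simp only: field_gen_field_gen_Un)
  qed
  ultimately show ?case by simp
qed

lemma affine_top_tower_diff_adjoin:
  assumes f: "iterated_integral D k f" "f \<notin> k"
  shows "affine_top_tower (diff_adjoin D k f) f"
  using affine_top_tower_derivatives[OF f, of "iint_order f"] iint_order_pos[OF f]
    diff_adjoin_eq_field_gen[OF f(1)] by (simp add: atLeast0LessThan)

lemma pv_data_diff_adjoin: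
  assumes f: "iterated_integral D k f" "f \<notin> k"
  defines "n \<equiv> iint_order f"
  defines "y \<equiv> \<lambda>i. if i < n then x ^ i else f"
  defines "a \<equiv> \<lambda>j. if j = n then - D ((D ^^ n) f) / (D ^^ n) f else 0"
  shows "pv_data D k (diff_adjoin D k f) (Suc n) a y"
proof -
  have fn: "(D ^^ n) f \<in> k" "(D ^^ n) f \<noteq> 0"
    using funpow_D_iint_order_mem[OF f(1)] funpow_D_iint_order_neq_0[OF f] by (simp_all add: n_def)
  have ak: "a j \<in> k" for j
    unfolding a_def using fn(1) D_mem_k k_subring subfield_divide[OF k_subfield] subring_uminus[OF k_subring]
    by simp
  have "y ` {..<n} \<subseteq> k" using x_mem_k subring_power[OF k_subring] by (auto simp: y_def)
  then have gens: "k \<union> y ` {..<Suc n} = k \<union> {f}" by (auto simp: lessThan_Suc y_def)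
  then have L: "diff_adjoin D k f = diff_field_gen D (k \<union> y ` {..<Suc n})" by (simp add: diff_adjoin_def)
  have yL: "y i \<in> diff_adjoin D k f" if "i < Suc n" for i
    using that gens diff_field_gen_superset[of "k \<union> y ` {..<Suc n}" D] unfolding L by blast
  have ode: "(D ^^ Suc n) (y i) + (\<Sum>j<Suc n. a j * (D ^^ j) (y i)) = 0" for i
    using fn(2) funpow_D_x_power[of i n] funpow_D_x_power[of i "Suc n"] by (simp add: a_def y_def)
  have indep: "\<forall>i<Suc n. c i = 0" if "\<forall>i<Suc n. D (c i) = 0" "(\<Sum>i<Suc n. c i * y i) = 0" for c
  proof -
    have "(\<Sum>i<n. c i * y i) = (\<Sum>i<n. c i * x ^ i)" by (intro sum.cong) (simp_all add: y_def)
    then have "(\<Sum>i<n. c i * x ^ i) + c n * f = 0" using that(2) by (simp add: y_def)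
    moreover have "\<forall>i\<le>n. D (c i) = 0" using that(1) by (simp add: less_Suc_eq_le)
    ultimately show ?thesis using x_powers_f_independent[OF f(2)] by (simp add: less_Suc_eq_le)
  qed
  have "\<forall>j<Suc n. a j \<in> k" using ak by blast
  moreover have "\<forall>i<Suc n. y i \<in> diff_adjoin D k f \<and>
      (D ^^ Suc n) (y i) + (\<Sum>j<Suc n. a j * (D ^^ j) (y i)) = 0"
    using yL ode by blast
  moreover have "\<forall>c. (\<forall>i<Suc n. D (c i) = 0) \<and> (\<Sum>i<Suc n. c i * y i) = 0 \<longrightarrow> (\<forall>i<Suc n. c i = 0)"
    using indep by blast
  ultimately show ?thesis unfolding pv_data_def using L by (intro conjI) assumption+
qed

lemma picard_vessiot_diff_adjoin:
  assumes f: "iterated_integral D k f"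
  shows "picard_vessiot D k (diff_adjoin D k f)"
proof -
  have "\<exists>n a y. pv_data D k (diff_adjoin D k f) n a y"
  proof (cases "f \<in> k")
    case True
    then have "pv_data D k (diff_adjoin D k f) 0 (\<lambda>_. 0) (\<lambda>_. 0)"
      using diff_adjoin_mem diff_field_gen_idem[OF k_diff_subfield] by (simp add: pv_data_def)
    then show ?thesis by blast
  next
    case False
    then show ?thesis using pv_data_diff_adjoin[OF f] by blast
  qed
  moreover have "k \<subseteq> diff_adjoin D k f"
    unfolding diff_adjoin_def using diff_field_gen_superset by blast
  moreover have "is_diff_subfield D (diff_adjoin D k f)"
    unfolding diff_adjoin_def by (rule diff_field_gen_diff_subfield)
  ultimately show ?thesis
    unfolding picard_vessiot_def using k_diff_subfield constants_k C_subset_k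
    by (auto simp: constants_of_def)
qed

lemma unipotent_galois_diff_adjoin:
  assumes f: "iterated_integral D k f"
  shows "unipotent_galois D k (diff_adjoin D k f)"
proof -
  obtain r u where "primitive_tower u r" "tower_field u r = diff_adjoin D k f"
  proof (cases "f \<in> k")
    case True
    have "tower_field (\<lambda>_. 0) 0 = diff_adjoin D k f"
      using field_gen_idem[OF k_subfield] diff_adjoin_mem[OF True] by (simp add: tower_field_def)
    then show ?thesis using that[of "\<lambda>_. 0" 0] by (simp add: primitive_tower_def)
  next
    case False
    then show ?thesis using that affine_top_tower_diff_adjoin[OF f] unfolding affine_top_tower_def by blast
  qed
  then show ?thesis using unipotent_galois_tower_field[of u r] by simp
qed

lemma diff_adjoin_transcendence_basis:
  assumes f: "iterated_integral D k f" "f \<notin> k"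
  shows "\<exists>r y. r \<ge> 1 \<and> y (r - 1) = f \<and> (\<forall>i<r. y i \<in> diff_adjoin D k f) \<and>
           alg_indep k r y \<and> diff_adjoin D k f = field_gen (k \<union> y ` {..<r})"
    and "rel_alg_closed_in (field_gen (k \<union> {f})) (diff_adjoin D k f)"
proof -
  obtain r :: nat and y where r: "1 \<le> r" "y (r - 1) = f"
    and tr: "\<forall>i<r. \<not> algebraic_over (field_gen (k \<union> y ` {..<i})) (y i)"
    and L: "diff_adjoin D k f = field_gen (k \<union> y ` {..<r})"
    using transcendence_tower_of_affine_top_tower[OF affine_top_tower_diff_adjoin[OF f]] by blast
  have "\<forall>i<r. y i \<in> diff_adjoin D k f"
    using field_gen_superset[of "k \<union> y ` {..<r}"] unfolding L by auto
  then show "\<exists>r y. r \<ge> 1 \<and> y (r - 1) = f \<and> (\<forall>i<r. y i \<in> diff_adjoin D k f) \<and>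
      alg_indep k r y \<and> diff_adjoin D k f = field_gen (k \<union> y ` {..<r})"
    using r L alg_indep_transcendence_tower[OF tr] by (intro exI[of _ r] exI[of _ y]) simp
  show "rel_alg_closed_in (field_gen (k \<union> {f})) (diff_adjoin D k f)"
    using rel_alg_closed_in_transcendence_tower_last[OF r(1) tr] unfolding r(2) L .
qed

end

theorem lemma31:
  fixes D :: "'a::field_char_0 \<Rightarrow> 'a" and k :: "'a set" and f :: 'a
  assumes "is_derivation D"
    and "is_diff_subfield D k"
    and "constants_of D k = constants_of D UNIV"
    and "alg_closed_subfield (constants_of D UNIV)"
    and "\<exists>x\<in>k. D x = 1"
    and "iterated_integral D k f"
  shows "picard_vessiot D k (diff_adjoin D k f) \<and> unipotent_galois D k (diff_adjoin D k f) \<and>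
         (f \<notin> k \<longrightarrow>
           (\<exists>r y. r \<ge> 1 \<and> y (r - 1) = f \<and> (\<forall>i<r. y i \<in> diff_adjoin D k f) \<and>
              alg_indep k r y \<and> diff_adjoin D k f = field_gen (k \<union> y ` {..<r}))
           \<and> rel_alg_closed_in (field_gen (k \<union> {f})) (diff_adjoin D k f))"
proof -
  obtain x where "x \<in> k" "D x = 1" using assms(5) by blast
  then interpret same_constants_x D k x
    using assms(1-3) by unfold_locales auto
  show ?thesis
    using picard_vessiot_diff_adjoin[OF assms(6)] unipotent_galois_diff_adjoin[OF assms(6)]
      diff_adjoin_transcendence_basis[OF assms(6)] by blast
qed

end
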